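(* Let $X$ and $Y$ be completely regular Hausdorff spaces, $\mu\in\mathcal{P}_\sigma(X)$ and $\nu\in\mathcal{P}_\sigma(Y)$ Baire probability measures, and $c\in lsc_{bi}(X\times Y)$ such that $v_{\min}(\mathbf{OP})<+\infty$. Then $\Gamma(\mu,\nu)$ is a nonempty convex compact subset of $\mathcal{M}^1(X\times Y)$ for the weak topology, and the problem $(\mathbf{OP})$ has a solution, i.e. there is $\gamma^*\in\Gamma(\mu,\nu)$ with $\int_{X\times Y}c\,d\gamma^*=v_{\min}(\mathbf{OP})$.
   Context: $C_b(Z)$: real-valued bounded continuous functions on $Z$. $\mathcal{U}(Z)$: algebra generated by zero-sets of $Z$. $\mathcal{M}^1(Z)$: finitely additive $\gamma:\mathcal{U}(Z)\to[0,\infty)$ with $\gamma(Z)=1$ that are regular (for every $A\in\mathcal{U}(Z)$, $\varepsilon>0$ there is a zero-set $F\subseteq A$ with $\gamma(A\setminus F)<\varepsilon$); weak topology: $\gamma_\alpha\to\gamma$ iff $\int f d\gamma_\alpha\to\int fd\gamma$ for all $f\in C_b(Z)$. $lsc_{bi}(Z)$: proper, bounded-below, lower semicontinuous $g:Z\to\mathbb{R}\cup\{+\infty\}$, with $\int g\,d\gamma:=\sup\{\int f d\gamma: f\in C_b(Z), f\le g\}$. $\mathcal{P}_\sigma(X)$: Baire probability measures (countably additive on the $\sigma$-algebra generated by zero-sets). $(\phi\oplus\psi)(x,y):=\phi(x)+\psi(y)$. $\Gamma(\mu,\nu):=\{\gamma\in\mathcal{M}^1(X\times Y): \int_{X\times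 Y}\phi\oplus\psi\,d\gamma=\int_X\phi\,d\mu+\int_Y\psi\,d\nu\ \ \forall\phi\in C_b(X),\psi\in C_b(Y)\}$, and $v_{\min}(\mathbf{OP}):=\inf\{\int_{X\times Y}c\,d\gamma:\gamma\in\Gamma(\mu,\nu)\}$. *)

theory Defs
  imports "HOL-Analysis.Analysis" "HOL-Probability.Probability"
begin

definition Cb :: "('z::topological_space \<Rightarrow> real) set" where
  "Cb = {f. continuous_on UNIV f \<and> bounded (range f)}"

definition zero_sets :: "'z::topological_space set set" where
  "zero_sets = {f -` {0} | f :: 'z \<Rightarrow> real. continuous_on UNIV f}"

definition zs_algebra :: "'z::topological_space set set" where
  "zs_algebra = \<Inter>{A. algebra UNIV A \<and> zero_sets \<subseteq> A}"

text \<open>M^1(Z): regular finitely additive probabilities on U(Z);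
  represented as set functions that vanish outside U(Z).\<close>
definition M1 :: "('z::topological_space set \<Rightarrow> real) set" where
  "M1 = {\<gamma>. (\<forall>A. A \<notin> zs_algebra \<longrightarrow> \<gamma> A = 0)
          \<and> (\<forall>A\<in>zs_algebra. 0 \<le> \<gamma> A)
          \<and> (\<forall>A\<in>zs_algebra. \<forall>B\<in>zs_algebra. A \<inter> B = {} \<longrightarrow> \<gamma> (A \<union> B) = \<gamma> A + \<gamma> B)
          \<and> \<gamma> UNIV = 1
          \<and> (\<forall>A\<in>zs_algebra. \<forall>\<epsilon>>0. \<exists>F\<in>zero_sets. F \<subseteq> A \<and> \<gamma> (A - F) < \<epsilon>)}"

definition fa_integral :: "('z::topological_space set \<Rightarrow> real) \<Rightarrow> ('z \<Rightarrow> real) \<Rightarrow> real" where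
  "fa_integral \<gamma> f = Sup {(\<Sum>A\<in>P. Inf (f ` A) * \<gamma> A) | P.
      finite P \<and> P \<subseteq> zs_algebra \<and> disjoint P \<and> \<Union>P = UNIV \<and> {} \<notin> P}"

definition lsc_bi :: "('z::topological_space \<Rightarrow> ereal) set" where
  "lsc_bi = {g. (\<exists>z. g z \<noteq> \<infinity>) \<and> (\<exists>b::real. \<forall>z. ereal b \<le> g z)
               \<and> (\<forall>t::real. open {z. ereal t < g z})}"

definition lsc_integral :: "('z::topological_space set \<Rightarrow> real) \<Rightarrow> ('z \<Rightarrow> ereal) \<Rightarrow> ereal" where
  "lsc_integral \<gamma> g = (SUP f\<in>{f\<in>Cb. \<forall>z. ereal (f z) \<le> g z}. ereal (fa_integral \<gamma> f))"

definition weak_top :: "('z::topological_space set \<Rightarrow> real) topology" where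
  "weak_top = pullback_topology M1 (\<lambda>\<gamma>. restrict (\<lambda>f. fa_integral \<gamma> f) Cb) (powertop_real Cb)"

definition baire_prob :: "'z::topological_space measure \<Rightarrow> bool" where
  "baire_prob \<mu> \<longleftrightarrow> prob_space \<mu> \<and> space \<mu> = UNIV \<and> sets \<mu> = sigma_sets UNIV zero_sets"

definition plans :: "'a::topological_space measure \<Rightarrow> 'b::topological_space measure
    \<Rightarrow> (('a \<times> 'b) set \<Rightarrow> real) set" where
  "plans \<mu> \<nu> = {\<gamma>\<in>M1. \<forall>\<phi>\<in>Cb. \<forall>\<psi>\<in>Cb.
      fa_integral \<gamma> (\<lambda>(x,y). \<phi> x + \<psi> y) = integral\<^sup>L \<mu> \<phi> + integral\<^sup>L \<nu> \<psi>}"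

definition v_min :: "'a::topological_space measure \<Rightarrow> 'b::topological_space measure
    \<Rightarrow> ('a \<times> 'b \<Rightarrow> ereal) \<Rightarrow> ereal" where
  "v_min \<mu> \<nu> c = (INF \<gamma>\<in>plans \<mu> \<nu>. lsc_integral \<gamma> c)"

end

theory Submission
  imports Defs
begin

text \<open>Identify a plan \<open>\<gamma>\<close> with its integral map \<open>f \<mapsto> \<integral> f d\<gamma>\<close> on \<open>C\<^sub>b\<close>. The image of \<open>\<Gamma>(\<mu>,\<nu>)\<close>
  lies in the product of the compact intervals \<open>[-sup |f|, sup |f|]\<close>, so by Tychonoff it is compact
  once it is closed. A pointwise limit of integral maps is a positive normalised linear functional
  on \<open>C\<^sub>b\<close>, and by Alexandroff's representation theorem every such functional is the integral
  against a regular finitely additive probability on the zero-set algebra; the marginal constraints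
  pass to the limit, so the image is closed. Convexity is linearity of the integral in \<open>\<gamma>\<close>.
  Finally \<open>\<gamma> \<mapsto> \<integral> c d\<gamma>\<close> is the supremum of the continuous maps \<open>\<gamma> \<mapsto> \<integral> f d\<gamma>\<close> over the
  directed family of minorants \<open>f \<le> c\<close> in \<open>C\<^sub>b\<close>, so the finite intersection property of the
  compact set \<open>\<Gamma>(\<mu>,\<nu>)\<close> yields a minimiser.\<close>

section \<open>Bounded continuous functions and zero sets\<close>

lemma Cb_iff: "f \<in> Cb \<longleftrightarrow> continuous_on UNIV f \<and> (\<exists>B. \<forall>x. \<bar>f x\<bar> \<le> B)"
  unfolding Cb_def bounded_real by auto

lemma CbI: "continuous_on UNIV f \<Longrightarrow> (\<And>x. \<bar>f x\<bar> \<le> B) \<Longrightarrow> f \<in> Cb"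
  unfolding Cb_iff by blast

lemma Cb_continuous: "f \<in> Cb \<Longrightarrow> continuous_on UNIV f"
  by (simp add: Cb_iff)

lemma Cb_bounded: "f \<in> Cb \<Longrightarrow> \<exists>B. \<forall>x. \<bar>f x\<bar> \<le> B"
  by (simp add: Cb_iff)

definition sup_abs :: "('z \<Rightarrow> real) \<Rightarrow> real" where
  "sup_abs f = (SUP x. \<bar>f x\<bar>)"

lemma abs_le_sup_abs:
  assumes "f \<in> Cb"
  shows "\<bar>f x\<bar> \<le> sup_abs f"
proof -
  obtain B where "\<forall>x. \<bar>f x\<bar> \<le> B" using Cb_bounded[OF assms] ..
  then have "bdd_above (range (\<lambda>x. \<bar>f x\<bar>))" by (intro bdd_aboveI2) blast
  then show ?thesis unfolding sup_abs_def by (rule cSUP_upper[OF UNIV_I])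
qed

lemma Cb_const [simp]: "(\<lambda>x. c) \<in> Cb"
  by (rule CbI[of _ "\<bar>c\<bar>"]) simp_all

lemma Cb_add:
  assumes "f \<in> Cb" "g \<in> Cb"
  shows "(\<lambda>x. f x + g x) \<in> Cb"
proof -
  obtain A B where AB: "\<forall>x. \<bar>f x\<bar> \<le> A" "\<forall>x. \<bar>g x\<bar> \<le> B"
    using assms Cb_bounded by meson
  have "\<bar>f x + g x\<bar> \<le> A + B" for x
    using AB[rule_format, of x] abs_triangle_ineq[of "f x" "g x"] by linarith
  moreover have "continuous_on UNIV (\<lambda>x. f x + g x)"
    using assms by (simp add: Cb_continuous continuous_on_add)
  ultimately show ?thesis by (rule CbI[rotated])
qed

lemma Cb_mult:
  assumes "f \<in> Cb" "g \<in> Cb"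
  shows "(\<lambda>x. f x * g x) \<in> Cb"
proof -
  obtain A B where AB: "\<forall>x. \<bar>f x\<bar> \<le> A" "\<forall>x. \<bar>g x\<bar> \<le> B"
    using assms Cb_bounded by meson
  have "\<bar>f x * g x\<bar> \<le> A * B" for x
    using AB[rule_format, of x] by (simp add: abs_mult mult_mono')
  moreover have "continuous_on UNIV (\<lambda>x. f x * g x)"
    using assms by (simp add: Cb_continuous continuous_on_mult)
  ultimately show ?thesis by (rule CbI[rotated])
qed

lemma Cb_cmult: "f \<in> Cb \<Longrightarrow> (\<lambda>x. c * f x) \<in> Cb"
  using Cb_mult[of "\<lambda>x. c" f] by simp

lemma Cb_minus: "f \<in> Cb \<Longrightarrow> (\<lambda>x. - f x) \<in> Cb"
  using Cb_cmult[of f "-1"] by simp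

lemma Cb_diff: "f \<in> Cb \<Longrightarrow> g \<in> Cb \<Longrightarrow> (\<lambda>x. f x - g x) \<in> Cb"
  using Cb_add[OF _ Cb_minus] by simp

lemma Cb_max:
  assumes "f \<in> Cb" "g \<in> Cb"
  shows "(\<lambda>x. max (f x) (g x)) \<in> Cb"
proof -
  obtain A B where AB: "\<forall>x. \<bar>f x\<bar> \<le> A" "\<forall>x. \<bar>g x\<bar> \<le> B"
    using assms Cb_bounded by meson
  have "\<bar>max (f x) (g x)\<bar> \<le> A + B" for x
    using AB[rule_format, of x] by linarith
  moreover have "continuous_on UNIV (\<lambda>x. max (f x) (g x))"
    using assms by (simp add: Cb_continuous continuous_on_max)
  ultimately show ?thesis by (rule CbI[rotated])
qed

lemma Cb_min:
  assumes "f \<in> Cb" "g \<in> Cb"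
  shows "(\<lambda>x. min (f x) (g x)) \<in> Cb"
proof -
  obtain A B where AB: "\<forall>x. \<bar>f x\<bar> \<le> A" "\<forall>x. \<bar>g x\<bar> \<le> B"
    using assms Cb_bounded by meson
  have "\<bar>min (f x) (g x)\<bar> \<le> A + B" for x
    using AB[rule_format, of x] by linarith
  moreover have "continuous_on UNIV (\<lambda>x. min (f x) (g x))"
    using assms by (simp add: Cb_continuous continuous_on_min)
  ultimately show ?thesis by (rule CbI[rotated])
qed

lemma Cb_clamp: "f \<in> Cb \<Longrightarrow> (\<lambda>x. min 1 (max 0 (f x))) \<in> Cb"
  using Cb_min[OF Cb_const Cb_max[OF Cb_const]] .

lemma Cb_sum: "finite I \<Longrightarrow> (\<And>i. i \<in> I \<Longrightarrow> f i \<in> Cb) \<Longrightarrow> (\<lambda>x. \<Sum>i\<in>I. f i x) \<in> Cb"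
  by (induction I rule: finite_induct) (auto intro!: Cb_add)

lemma Cb_oplus:
  fixes \<phi> :: "'a::topological_space \<Rightarrow> real" and \<psi> :: "'b::topological_space \<Rightarrow> real"
  assumes "\<phi> \<in> Cb" "\<psi> \<in> Cb"
  shows "(\<lambda>(x, y). \<phi> x + \<psi> y) \<in> Cb"
proof -
  obtain A B where AB: "\<forall>x. \<bar>\<phi> x\<bar> \<le> A" "\<forall>y. \<bar>\<psi> y\<bar> \<le> B"
    using assms Cb_bounded by meson
  have "continuous_on UNIV (\<lambda>z::'a \<times> 'b. \<phi> (fst z))" "continuous_on UNIV (\<lambda>z::'a \<times> 'b. \<psi> (snd z))"
    using assms by (auto intro: continuous_on_compose2[of UNIV _ UNIV] simp: Cb_iff
        continuous_on_fst continuous_on_snd continuous_on_id)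
  then have "continuous_on UNIV (\<lambda>z::'a \<times> 'b. \<phi> (fst z) + \<psi> (snd z))"
    by (rule continuous_on_add)
  moreover have "\<bar>\<phi> (fst z) + \<psi> (snd z)\<bar> \<le> A + B" for z
    using AB(1)[rule_format, of "fst z"] AB(2)[rule_format, of "snd z"] by linarith
  ultimately show ?thesis
    unfolding case_prod_beta by (rule CbI)
qed

lemma Cb_minorants_directed:
  fixes c :: "'z::topological_space \<Rightarrow> ereal"
  assumes "finite S" "S \<subseteq> {f\<in>Cb. \<forall>z. ereal (f z) \<le> c z}" and b: "\<forall>z. ereal b \<le> c z"
  shows "\<exists>g\<in>{f\<in>Cb. \<forall>z. ereal (f z) \<le> c z}. \<forall>f\<in>S. \<forall>z. f z \<le> g z"
  using assms(1,2)
proof (induction S rule: finite_induct)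
  case empty
  show ?case using b by (intro bexI[of _ "\<lambda>z. b"]) auto
next
  case (insert h S)
  obtain g where g: "g \<in> Cb" "\<forall>z. ereal (g z) \<le> c z" "\<forall>f\<in>S. \<forall>z. f z \<le> g z" using insert by auto
  have h: "h \<in> Cb" "\<forall>z. ereal (h z) \<le> c z" using insert.prems by auto
  have "(\<lambda>z. max (h z) (g z)) \<in> Cb" by (rule Cb_max[OF h(1) g(1)])
  moreover have "\<forall>z. ereal (max (h z) (g z)) \<le> c z" using g(2) h(2) by (simp add: max_def)
  moreover have "\<forall>f\<in>insert h S. \<forall>z. f z \<le> max (h z) (g z)" using g(3) by (auto simp: le_max_iff_disj)
  ultimately show ?case by (intro bexI[of _ "\<lambda>z. max (h z) (g z)"]) simp_all
qed

lemma sum_clamped_layers: "(\<Sum>k<N. min 1 (max 0 (y - real k))) = min (max y 0) (real N)"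
proof (induction N)
  case 0 then show ?case by simp
next
  case (Suc N)
  have "(\<Sum>k<Suc N. min 1 (max 0 (y - real k))) = min (max y 0) (real N) + min 1 (max 0 (y - real N))"
    using Suc by simp
  also have "\<dots> = min (max y 0) (real (Suc N))" by (simp add: min_def max_def)
  finally show ?case .
qed

lemma Cb_layer_decomposition:
  assumes f: "f \<in> Cb" and d: "0 < \<delta>"
  obtains u c N where "u \<in> Cb"
    "\<And>x. f x = c + \<delta> * (\<Sum>k<N. min 1 (max 0 (u x - real k)))"
proof -
  obtain B where B: "\<forall>x. \<bar>f x\<bar> \<le> B" using Cb_bounded[OF f] by blast
  obtain N :: nat where N: "2 * B / \<delta> \<le> real N" using real_arch_simple by blast
  define u where "u x = (1/\<delta>) * f x + (B/\<delta>) * 1" for x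
  have "u \<in> Cb" unfolding u_def by (intro Cb_add Cb_cmult f Cb_const)
  moreover have "f x = - B + \<delta> * (\<Sum>k<N. min 1 (max 0 (u x - real k)))" for x
  proof -
    have ux: "u x = (f x + B) / \<delta>" unfolding u_def by (simp add: add_divide_distrib)
    have "0 \<le> f x + B" "f x + B \<le> 2 * B" using B[rule_format, of x] by linarith+
    then have "0 \<le> u x" "u x \<le> 2 * B / \<delta>" unfolding ux using d by (simp_all add: divide_right_mono)
    then have "0 \<le> u x" "u x \<le> real N" using N by linarith+
    then have "(\<Sum>k<N. min 1 (max 0 (u x - real k))) = u x" by (simp add: sum_clamped_layers)
    then show ?thesis unfolding u_def using d by (simp add: algebra_simps)
  qed
  ultimately show thesis by (rule that)
qed

lemma zero_setsI: "continuous_on UNIV (f :: _ \<Rightarrow> real) \<Longrightarrow> f -` {0} \<in> zero_sets"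
  unfolding zero_sets_def by auto

lemma zero_setsE:
  assumes "F \<in> zero_sets"
  obtains f :: "_ \<Rightarrow> real" where "continuous_on UNIV f" "F = f -` {0}"
  using assms unfolding zero_sets_def by auto

lemma zero_sets_empty [simp]: "{} \<in> zero_sets"
  using zero_setsI[of "\<lambda>x. 1"] by simp

lemma zero_sets_UNIV [simp]: "UNIV \<in> zero_sets"
  using zero_setsI[of "\<lambda>x. 0"] by simp

lemma zero_sets_Un:
  assumes "F \<in> zero_sets" "G \<in> zero_sets"
  shows "F \<union> G \<in> zero_sets"
proof -
  obtain f g :: "_ \<Rightarrow> real" where "continuous_on UNIV f" "F = f -` {0}" "continuous_on UNIV g" "G = g -` {0}"
    by (metis assms zero_setsE)
  moreover have "F \<union> G = (\<lambda>x. f x * g x) -` {0}" using calculation by auto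
  moreover have "continuous_on UNIV (\<lambda>x. f x * g x)"
    using calculation by (intro continuous_on_mult)
  ultimately show ?thesis by (simp add: zero_setsI)
qed

lemma zero_sets_Int:
  assumes "F \<in> zero_sets" "G \<in> zero_sets"
  shows "F \<inter> G \<in> zero_sets"
proof -
  obtain f g :: "_ \<Rightarrow> real" where "continuous_on UNIV f" "F = f -` {0}" "continuous_on UNIV g" "G = g -` {0}"
    by (metis assms zero_setsE)
  moreover have "F \<inter> G = (\<lambda>x. \<bar>f x\<bar> + \<bar>g x\<bar>) -` {0}" using calculation by auto
  moreover have "continuous_on UNIV (\<lambda>x. \<bar>f x\<bar> + \<bar>g x\<bar>)"
    using calculation by (intro continuous_intros)
  ultimately show ?thesis by (simp add: zero_setsI)
qed

lemma zero_sets_ge: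
  assumes "continuous_on UNIV f"
  shows "{x. (t::real) \<le> f x} \<in> zero_sets"
proof -
  have "{x. t \<le> f x} = (\<lambda>x. max 0 (t - f x)) -` {0}" by auto
  moreover have "continuous_on UNIV (\<lambda>x. max 0 (t - f x))"
    using assms by (intro continuous_intros)
  ultimately show ?thesis by (simp add: zero_setsI)
qed

lemma zero_sets_le: "continuous_on UNIV f \<Longrightarrow> {x. f x \<le> (t::real)} \<in> zero_sets"
  using zero_sets_ge[of "\<lambda>x. - f x" "-t"] by (simp add: continuous_on_minus)

lemma zero_sets_separation:
  assumes "F \<in> zero_sets" "G \<in> zero_sets" "F \<inter> G = {}"
  obtains u where "u \<in> Cb" "\<And>x. 0 \<le> u x \<and> u x \<le> 1" "\<And>x. x \<in> F \<Longrightarrow> u x = 1" "\<And>x. x \<in> G \<Longrightarrow> u x = 0"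
proof -
  obtain f g :: "_ \<Rightarrow> real" where fg: "continuous_on UNIV f" "F = f -` {0}" "continuous_on UNIV g" "G = g -` {0}"
    by (metis assms(1,2) zero_setsE)
  have nz: "\<bar>f x\<bar> + \<bar>g x\<bar> \<noteq> 0" for x
  proof
    assume "\<bar>f x\<bar> + \<bar>g x\<bar> = 0"
    then have "x \<in> F \<inter> G" using fg by auto
    with assms(3) show False by blast
  qed
  define u where "u x = \<bar>g x\<bar> / (\<bar>f x\<bar> + \<bar>g x\<bar>)" for x
  have u01: "0 \<le> u x \<and> u x \<le> 1" for x
    unfolding u_def using nz[of x] by (auto simp: divide_le_eq_1)
  have "continuous_on UNIV u"
    unfolding u_def using fg nz by (intro continuous_intros) auto
  then have "u \<in> Cb"
    using u01 by (intro CbI[of _ 1]) auto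
  moreover have "u x = 1" if "x \<in> F" for x
    using that fg nz[of x] by (simp add: u_def)
  moreover have "u x = 0" if "x \<in> G" for x
    using that fg by (simp add: u_def)
  ultimately show thesis using that u01 by presburger
qed

lemma algebra_zs_algebra: "algebra UNIV (zs_algebra :: 'z::topological_space set set)"
  unfolding algebra_iff_Un
proof (intro conjI ballI)
  show "zs_algebra \<subseteq> Pow UNIV" by simp
  show "{} \<in> zs_algebra" unfolding zs_algebra_def by (auto simp: algebra_iff_Un)
  fix a :: "'z set" assume a: "a \<in> zs_algebra"
  show "UNIV - a \<in> zs_algebra" unfolding zs_algebra_def
  proof
    fix A :: "'z set set" assume "A \<in> {A. algebra UNIV A \<and> zero_sets \<subseteq> A}"
    then have "algebra UNIV A" "a \<in> A" using a unfolding zs_algebra_def by auto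
    then show "UNIV - a \<in> A" by (simp add: algebra_iff_Un)
  qed
  fix b :: "'z set" assume b: "b \<in> zs_algebra"
  show "a \<union> b \<in> zs_algebra" unfolding zs_algebra_def
  proof
    fix A :: "'z set set" assume "A \<in> {A. algebra UNIV A \<and> zero_sets \<subseteq> A}"
    then have "algebra UNIV A" "a \<in> A" "b \<in> A" using a b unfolding zs_algebra_def by auto
    then show "a \<union> b \<in> A" by (simp add: algebra_iff_Un)
  qed
qed

lemma zero_sets_subset_zs_algebra: "zero_sets \<subseteq> zs_algebra"
  unfolding zs_algebra_def by auto

lemma zs_algebra_minimal: "algebra UNIV D \<Longrightarrow> zero_sets \<subseteq> D \<Longrightarrow> zs_algebra \<subseteq> D"
  unfolding zs_algebra_def by auto

lemma zs_algebra_zero_set: "F \<in> zero_sets \<Longrightarrow> F \<in> zs_algebra"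
  using zero_sets_subset_zs_algebra by blast

lemma zs_algebra_empty [simp]: "{} \<in> zs_algebra" and zs_algebra_UNIV [simp]: "UNIV \<in> zs_algebra"
  using zs_algebra_zero_set zero_sets_empty zero_sets_UNIV by blast+

lemma zs_algebra_Un: "A \<in> zs_algebra \<Longrightarrow> B \<in> zs_algebra \<Longrightarrow> A \<union> B \<in> zs_algebra"
  using algebra_zs_algebra unfolding algebra_iff_Un by blast

lemma zs_algebra_Int: "A \<in> zs_algebra \<Longrightarrow> B \<in> zs_algebra \<Longrightarrow> A \<inter> B \<in> zs_algebra"
  using algebra_zs_algebra unfolding algebra_iff_Int by blast

lemma zs_algebra_Compl: "A \<in> zs_algebra \<Longrightarrow> - A \<in> zs_algebra"
  using algebra_zs_algebra unfolding algebra_iff_Un Compl_eq_Diff_UNIV by blast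

lemma zs_algebra_Diff: "A \<in> zs_algebra \<Longrightarrow> B \<in> zs_algebra \<Longrightarrow> A - B \<in> zs_algebra"
  using zs_algebra_Int[OF _ zs_algebra_Compl] by (simp add: Diff_eq)

lemma zs_algebra_UN:
  "finite I \<Longrightarrow> (\<And>i. i \<in> I \<Longrightarrow> S i \<in> zs_algebra) \<Longrightarrow> (\<Union>i\<in>I. S i) \<in> zs_algebra"
  by (induction I rule: finite_induct) (auto intro: zs_algebra_Un)

section \<open>Finitely additive probabilities and their integral\<close>

lemma eq_linear_comb_if_approx:
  fixes x y z a b :: real
  assumes approx: "\<And>\<delta>. 0 < \<delta> \<Longrightarrow>
    \<exists>x' y' z'. \<bar>x - x'\<bar> \<le> \<delta> \<and> \<bar>y - y'\<bar> \<le> \<delta> \<and> \<bar>z - z'\<bar> \<le> \<delta> \<and> x' = a * y' + b * z'"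
  shows "x = a * y + b * z"
proof -
  have "\<bar>x - (a * y + b * z)\<bar> \<le> 0 + e" if "0 < e" for e
  proof -
    define \<delta> where "\<delta> = e / (1 + \<bar>a\<bar> + \<bar>b\<bar>)"
    have \<delta>: "0 < \<delta>" "(1 + \<bar>a\<bar> + \<bar>b\<bar>) * \<delta> = e"
      unfolding \<delta>_def using that by (simp_all add: add_pos_nonneg)
    obtain x' y' z' where xyz: "\<bar>x - x'\<bar> \<le> \<delta>" "\<bar>y - y'\<bar> \<le> \<delta>" "\<bar>z - z'\<bar> \<le> \<delta>" "x' = a * y' + b * z'"
      using approx[OF \<delta>(1)] by blast
    have "\<bar>a * (y - y')\<bar> \<le> \<bar>a\<bar> * \<delta>" "\<bar>b * (z - z')\<bar> \<le> \<bar>b\<bar> * \<delta>"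
      using xyz(2,3) by (simp_all add: abs_mult mult_left_mono)
    moreover have "x - (a * y + b * z) = (x - x') - a * (y - y') - b * (z - z')"
      using xyz(4) by (simp add: algebra_simps)
    ultimately have "\<bar>x - (a * y + b * z)\<bar> \<le> \<delta> + \<bar>a\<bar> * \<delta> + \<bar>b\<bar> * \<delta>"
      using xyz(1) by (smt (verit))
    also have "\<dots> = e" using \<delta>(2) by (simp add: algebra_simps)
    finally show ?thesis by simp
  qed
  then have "\<bar>x - (a * y + b * z)\<bar> \<le> 0" by (rule field_le_epsilon)
  then show ?thesis by simp
qed

definition fa_prob :: "('z::topological_space set \<Rightarrow> real) \<Rightarrow> bool" where
  "fa_prob \<gamma> \<longleftrightarrow> (\<forall>A\<in>zs_algebra. 0 \<le> \<gamma> A)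
     \<and> (\<forall>A\<in>zs_algebra. \<forall>B\<in>zs_algebra. A \<inter> B = {} \<longrightarrow> \<gamma> (A \<union> B) = \<gamma> A + \<gamma> B)
     \<and> \<gamma> UNIV = 1"

lemma M1_fa_prob: "\<gamma> \<in> M1 \<Longrightarrow> fa_prob \<gamma>"
  unfolding M1_def fa_prob_def by blast

lemma fa_prob_nonneg: "fa_prob \<gamma> \<Longrightarrow> A \<in> zs_algebra \<Longrightarrow> 0 \<le> \<gamma> A"
  unfolding fa_prob_def by blast

lemma fa_prob_add: "fa_prob \<gamma> \<Longrightarrow> A \<in> zs_algebra \<Longrightarrow> B \<in> zs_algebra \<Longrightarrow> A \<inter> B = {} \<Longrightarrow> \<gamma> (A \<union> B) = \<gamma> A + \<gamma> B"
  unfolding fa_prob_def by blast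

lemma fa_prob_UNIV: "fa_prob \<gamma> \<Longrightarrow> \<gamma> UNIV = 1"
  unfolding fa_prob_def by blast

lemma fa_prob_empty: "fa_prob \<gamma> \<Longrightarrow> \<gamma> {} = 0"
  using fa_prob_add[of \<gamma> "{}" "{}"] by simp

lemma fa_prob_Diff:
  assumes "fa_prob \<gamma>" "A \<in> zs_algebra" "B \<in> zs_algebra" "B \<subseteq> A"
  shows "\<gamma> (A - B) = \<gamma> A - \<gamma> B"
proof -
  have "A = B \<union> (A - B)" using assms(4) by blast
  then have "\<gamma> A = \<gamma> B + \<gamma> (A - B)"
    using fa_prob_add[OF assms(1,3) zs_algebra_Diff[OF assms(2,3)]] by simp
  then show ?thesis by simp
qed

lemma fa_prob_mono: "fa_prob \<gamma> \<Longrightarrow> A \<in> zs_algebra \<Longrightarrow> B \<in> zs_algebra \<Longrightarrow> B \<subseteq> A \<Longrightarrow> \<gamma> B \<le> \<gamma> A"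
  using fa_prob_Diff[of \<gamma> A B] fa_prob_nonneg[of \<gamma> "A - B"] zs_algebra_Diff[of A B] by simp

lemma fa_prob_finite_UN:
  assumes g: "fa_prob \<gamma>" and fin: "finite I" and S: "\<And>i. i \<in> I \<Longrightarrow> S i \<in> zs_algebra"
    and dis: "\<And>i j. i \<in> I \<Longrightarrow> j \<in> I \<Longrightarrow> i \<noteq> j \<Longrightarrow> S i \<inter> S j = {}"
  shows "\<gamma> (\<Union>i\<in>I. S i) = (\<Sum>i\<in>I. \<gamma> (S i))"
  using fin S dis
proof (induction I rule: finite_induct)
  case empty then show ?case using fa_prob_empty[OF g] by simp
next
  case (insert j I)
  have d: "S j \<inter> (\<Union>i\<in>I. S i) = {}" using insert.prems(2) insert.hyps(2) by fastforce
  have "\<gamma> (\<Union>i\<in>insert j I. S i) = \<gamma> (S j \<union> (\<Union>i\<in>I. S i))" by simp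
  also have "\<dots> = \<gamma> (S j) + \<gamma> (\<Union>i\<in>I. S i)"
    using fa_prob_add[OF g insert.prems(1)[of j] zs_algebra_UN[OF insert.hyps(1)] d] insert.prems(1) by simp
  also have "\<gamma> (\<Union>i\<in>I. S i) = (\<Sum>i\<in>I. \<gamma> (S i))"
    using insert.IH insert.prems by simp
  finally show ?case using insert.hyps by simp
qed

definition zs_partitions :: "'z::topological_space set set set" where
  "zs_partitions = {P. finite P \<and> P \<subseteq> zs_algebra \<and> disjoint P \<and> \<Union>P = UNIV \<and> {} \<notin> P}"

definition lower_sum :: "('z set \<Rightarrow> real) \<Rightarrow> ('z \<Rightarrow> real) \<Rightarrow> 'z set set \<Rightarrow> real" where
  "lower_sum \<gamma> f P = (\<Sum>A\<in>P. Inf (f ` A) * \<gamma> A)"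

definition upper_sum :: "('z set \<Rightarrow> real) \<Rightarrow> ('z \<Rightarrow> real) \<Rightarrow> 'z set set \<Rightarrow> real" where
  "upper_sum \<gamma> f P = (\<Sum>A\<in>P. Sup (f ` A) * \<gamma> A)"

text \<open>Blocks of a partition are nonempty, so \<open>SOME\<close> picks a tag inside each block.\<close>

definition tag_sum :: "('z set \<Rightarrow> real) \<Rightarrow> ('z \<Rightarrow> real) \<Rightarrow> 'z set set \<Rightarrow> real" where
  "tag_sum \<gamma> f P = (\<Sum>A\<in>P. f (SOME x. x \<in> A) * \<gamma> A)"

lemma fa_integral_eq_Sup_lower_sum: "fa_integral \<gamma> f = Sup ((\<lambda>P. lower_sum \<gamma> f P) ` zs_partitions)"
  unfolding fa_integral_def lower_sum_def zs_partitions_def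
  by (rule arg_cong[where f=Sup]) blast

lemma zs_partitions_UNIV: "{UNIV} \<in> zs_partitions"
  unfolding zs_partitions_def disjoint_def by auto

lemma zs_partitionsD:
  assumes "P \<in> zs_partitions"
  shows "finite P" "\<And>A. A \<in> P \<Longrightarrow> A \<in> zs_algebra" "\<And>A B. A \<in> P \<Longrightarrow> B \<in> P \<Longrightarrow> A \<noteq> B \<Longrightarrow> A \<inter> B = {}"
    "\<Union>P = UNIV" "\<And>A. A \<in> P \<Longrightarrow> A \<noteq> {}"
  using assms unfolding zs_partitions_def disjoint_def by auto

lemma zs_partitions_image:
  assumes "finite I" "\<And>i. i \<in> I \<Longrightarrow> S i \<in> zs_algebra"
    and "\<And>i j. i \<in> I \<Longrightarrow> j \<in> I \<Longrightarrow> S i \<noteq> S j \<Longrightarrow> S i \<inter> S j = {}"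
    and "(\<Union>i\<in>I. S i) = UNIV"
  shows "S ` I - {{}} \<in> zs_partitions"
  unfolding zs_partitions_def disjoint_def
proof (intro CollectI conjI ballI impI)
  show "\<Union> (S ` I - {{}}) = UNIV" using assms(4) by blast
qed (use assms(1-3) in auto)

definition bdd_fun :: "('z \<Rightarrow> real) \<Rightarrow> bool" where
  "bdd_fun f \<longleftrightarrow> (\<exists>B. \<forall>x. \<bar>f x\<bar> \<le> B)"

lemma bdd_fun_Cb: "f \<in> Cb \<Longrightarrow> bdd_fun f"
  unfolding bdd_fun_def using Cb_bounded by blast

lemma bdd_below_image: "bdd_fun f \<Longrightarrow> bdd_below (f ` A)"
  unfolding bdd_fun_def bdd_below_def by (metis abs_le_iff image_iff minus_le_iff)

lemma bdd_above_image: "bdd_fun f \<Longrightarrow> bdd_above (f ` A)"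
  unfolding bdd_fun_def bdd_above_def by (metis abs_le_iff image_iff)

lemma Inf_image_le: "bdd_fun f \<Longrightarrow> x \<in> A \<Longrightarrow> Inf (f ` A) \<le> f x"
  by (rule cInf_lower) (auto intro: bdd_below_image)

lemma le_Sup_image: "bdd_fun f \<Longrightarrow> x \<in> A \<Longrightarrow> f x \<le> Sup (f ` A)"
  by (rule cSup_upper) (auto intro: bdd_above_image)

lemma fa_prob_split:
  assumes g: "fa_prob \<gamma>" and Q: "Q \<in> zs_partitions" and A: "A \<in> zs_algebra"
  shows "\<gamma> A = (\<Sum>B\<in>Q. \<gamma> (A \<inter> B))"
proof -
  have "\<gamma> (\<Union>B\<in>Q. A \<inter> B) = (\<Sum>B\<in>Q. \<gamma> (A \<inter> B))"
  proof (rule fa_prob_finite_UN[OF g zs_partitionsD(1)[OF Q]])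
    show "\<And>B. B \<in> Q \<Longrightarrow> A \<inter> B \<in> zs_algebra" using A zs_partitionsD(2)[OF Q] zs_algebra_Int by blast
    show "\<And>B C. B \<in> Q \<Longrightarrow> C \<in> Q \<Longrightarrow> B \<noteq> C \<Longrightarrow> A \<inter> B \<inter> (A \<inter> C) = {}"
      using zs_partitionsD(3)[OF Q] by blast
  qed
  moreover have "(\<Union>B\<in>Q. A \<inter> B) = A" using zs_partitionsD(4)[OF Q] by blast
  ultimately show ?thesis by simp
qed

lemma lower_sum_le_upper_sum:
  assumes g: "fa_prob \<gamma>" and f: "bdd_fun f" and P: "P \<in> zs_partitions" and Q: "Q \<in> zs_partitions"
  shows "lower_sum \<gamma> f P \<le> upper_sum \<gamma> f Q"
proof -
  have "lower_sum \<gamma> f P = (\<Sum>A\<in>P. \<Sum>B\<in>Q. Inf (f ` A) * \<gamma> (A \<inter> B))"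
    unfolding lower_sum_def
    by (rule sum.cong[OF refl]) (simp add: fa_prob_split[OF g Q zs_partitionsD(2)[OF P]] sum_distrib_left)
  also have "\<dots> \<le> (\<Sum>A\<in>P. \<Sum>B\<in>Q. Sup (f ` B) * \<gamma> (A \<inter> B))"
  proof (intro sum_mono)
    fix A B assume A: "A \<in> P" and B: "B \<in> Q"
    show "Inf (f ` A) * \<gamma> (A \<inter> B) \<le> Sup (f ` B) * \<gamma> (A \<inter> B)"
    proof (cases "A \<inter> B = {}")
      case True then show ?thesis using fa_prob_empty[OF g] by simp
    next
      case False
      then obtain x where x: "x \<in> A" "x \<in> B" by blast
      have "Inf (f ` A) \<le> Sup (f ` B)"
        using Inf_image_le[OF f x(1)] le_Sup_image[OF f x(2)] by linarith
      moreover have "0 \<le> \<gamma> (A \<inter> B)"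
        using fa_prob_nonneg[OF g] zs_algebra_Int zs_partitionsD(2)[OF P A] zs_partitionsD(2)[OF Q B] by blast
      ultimately show ?thesis by (rule mult_right_mono)
    qed
  qed
  also have "\<dots> = (\<Sum>B\<in>Q. \<Sum>A\<in>P. Sup (f ` B) * \<gamma> (B \<inter> A))"
    by (subst sum.swap) (simp add: Int_commute)
  also have "\<dots> = upper_sum \<gamma> f Q"
    unfolding upper_sum_def
    by (rule sum.cong[OF refl]) (simp add: fa_prob_split[OF g P zs_partitionsD(2)[OF Q]] sum_distrib_left)
  finally show ?thesis .
qed

lemma lower_sum_le_fa_integral:
  assumes g: "fa_prob \<gamma>" and f: "bdd_fun f" and P: "P \<in> zs_partitions"
  shows "lower_sum \<gamma> f P \<le> fa_integral \<gamma> f"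
  unfolding fa_integral_eq_Sup_lower_sum
proof (rule cSup_upper)
  show "lower_sum \<gamma> f P \<in> (\<lambda>P. lower_sum \<gamma> f P) ` zs_partitions" using P by blast
  show "bdd_above ((\<lambda>P. lower_sum \<gamma> f P) ` zs_partitions)"
    unfolding bdd_above_def using lower_sum_le_upper_sum[OF g f _ zs_partitions_UNIV] by blast
qed

lemma fa_integral_le_upper_sum:
  assumes g: "fa_prob \<gamma>" and f: "bdd_fun f" and Q: "Q \<in> zs_partitions"
  shows "fa_integral \<gamma> f \<le> upper_sum \<gamma> f Q"
  unfolding fa_integral_eq_Sup_lower_sum
proof (rule cSup_least)
  show "(\<lambda>P. lower_sum \<gamma> f P) ` zs_partitions \<noteq> {}" using zs_partitions_UNIV by blast
  show "\<And>x. x \<in> (\<lambda>P. lower_sum \<gamma> f P) ` zs_partitions \<Longrightarrow> x \<le> upper_sum \<gamma> f Q"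
    using lower_sum_le_upper_sum[OF g f _ Q] by blast
qed

definition oscillation_le :: "('z \<Rightarrow> real) \<Rightarrow> 'z set set \<Rightarrow> real \<Rightarrow> bool" where
  "oscillation_le f P \<delta> \<longleftrightarrow> (\<forall>A\<in>P. \<forall>x\<in>A. \<forall>y\<in>A. f x \<le> f y + \<delta>)"

lemma Sup_image_le_Inf_image_add:
  assumes f: "bdd_fun f" and A: "A \<noteq> {}" and o: "\<forall>x\<in>A. \<forall>y\<in>A. f x \<le> f y + \<delta>"
  shows "Sup (f ` A) \<le> Inf (f ` A) + \<delta>"
proof -
  have Sy: "Sup (f ` A) \<le> f y + \<delta>" if y: "y \<in> A" for y
    by (rule cSup_least) (use A o y in auto)
  then have "Sup (f ` A) - \<delta> \<le> Inf (f ` A)"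
  proof (intro cInf_greatest)
    show "f ` A \<noteq> {}" using A by simp
    fix z assume "z \<in> f ` A"
    then obtain y where "y \<in> A" "z = f y" by blast
    then show "Sup (f ` A) - \<delta> \<le> z" using Sy[of y] by simp
  qed
  then show ?thesis by simp
qed

lemma tag_sum_bounds:
  assumes g: "fa_prob \<gamma>" and f: "bdd_fun f" and P: "P \<in> zs_partitions"
  shows "lower_sum \<gamma> f P \<le> tag_sum \<gamma> f P" "tag_sum \<gamma> f P \<le> upper_sum \<gamma> f P"
proof -
  show "lower_sum \<gamma> f P \<le> tag_sum \<gamma> f P" unfolding lower_sum_def tag_sum_def
  proof (rule sum_mono)
    fix A assume A: "A \<in> P"
    show "Inf (f ` A) * \<gamma> A \<le> f (SOME x. x \<in> A) * \<gamma> A"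
      using Inf_image_le[OF f some_in_eq[THEN iffD2, OF zs_partitionsD(5)[OF P A]]] fa_prob_nonneg[OF g zs_partitionsD(2)[OF P A]]
      by (rule mult_right_mono)
  qed
  show "tag_sum \<gamma> f P \<le> upper_sum \<gamma> f P" unfolding upper_sum_def tag_sum_def
  proof (rule sum_mono)
    fix A assume A: "A \<in> P"
    show "f (SOME x. x \<in> A) * \<gamma> A \<le> Sup (f ` A) * \<gamma> A"
      using le_Sup_image[OF f some_in_eq[THEN iffD2, OF zs_partitionsD(5)[OF P A]]] fa_prob_nonneg[OF g zs_partitionsD(2)[OF P A]]
      by (rule mult_right_mono)
  qed
qed

lemma fa_prob_partition_sum: "fa_prob \<gamma> \<Longrightarrow> P \<in> zs_partitions \<Longrightarrow> (\<Sum>A\<in>P. \<gamma> A) = 1"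
  using fa_prob_split[of \<gamma> P UNIV] fa_prob_UNIV[of \<gamma>] by simp

lemma upper_sum_le_lower_sum_add:
  assumes g: "fa_prob \<gamma>" and f: "bdd_fun f" and P: "P \<in> zs_partitions" and o: "oscillation_le f P \<delta>"
  shows "upper_sum \<gamma> f P \<le> lower_sum \<gamma> f P + \<delta>"
proof -
  have "upper_sum \<gamma> f P \<le> (\<Sum>A\<in>P. (Inf (f ` A) + \<delta>) * \<gamma> A)"
    unfolding upper_sum_def
  proof (rule sum_mono)
    fix A assume A: "A \<in> P"
    show "Sup (f ` A) * \<gamma> A \<le> (Inf (f ` A) + \<delta>) * \<gamma> A"
      using Sup_image_le_Inf_image_add[OF f zs_partitionsD(5)[OF P A]] o A fa_prob_nonneg[OF g zs_partitionsD(2)[OF P A]]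
      unfolding oscillation_le_def by (simp add: mult_right_mono)
  qed
  also have "\<dots> = lower_sum \<gamma> f P + \<delta> * (\<Sum>A\<in>P. \<gamma> A)"
    unfolding lower_sum_def by (simp add: distrib_right sum.distrib sum_distrib_left)
  also have "\<dots> = lower_sum \<gamma> f P + \<delta>" using fa_prob_partition_sum[OF g P] by simp
  finally show ?thesis .
qed

lemma fa_integral_tag_sum_approx:
  assumes g: "fa_prob \<gamma>" and f: "bdd_fun f" and P: "P \<in> zs_partitions" and o: "oscillation_le f P \<delta>"
  shows "\<bar>fa_integral \<gamma> f - tag_sum \<gamma> f P\<bar> \<le> \<delta>"
  using lower_sum_le_fa_integral[OF g f P] fa_integral_le_upper_sum[OF g f P] tag_sum_bounds[OF g f P] upper_sum_le_lower_sum_add[OF g f P o]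
  by linarith

definition common_refinement :: "'z set set \<Rightarrow> 'z set set \<Rightarrow> 'z set set" where
  "common_refinement P Q = (\<lambda>(A,B). A \<inter> B) ` (P \<times> Q) - {{}}"

lemma common_refinement_zs_partitions:
  assumes P: "P \<in> zs_partitions" and Q: "Q \<in> zs_partitions"
  shows "common_refinement P Q \<in> zs_partitions"
  unfolding common_refinement_def
proof (rule zs_partitions_image)
  show "finite (P \<times> Q)" using zs_partitionsD(1)[OF P] zs_partitionsD(1)[OF Q] by simp
  show "(\<lambda>(A, B). A \<inter> B) p \<in> zs_algebra" if "p \<in> P \<times> Q" for p
    using that zs_partitionsD(2)[OF P] zs_partitionsD(2)[OF Q] by (auto intro: zs_algebra_Int)
  show "(\<lambda>(A, B). A \<inter> B) p \<inter> (\<lambda>(A, B). A \<inter> B) q = {}"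
    if "p \<in> P \<times> Q" "q \<in> P \<times> Q" "(\<lambda>(A, B). A \<inter> B) p \<noteq> (\<lambda>(A, B). A \<inter> B) q" for p q
  proof -
    obtain A B A' B' where pq: "p = (A, B)" "q = (A', B')" by fastforce
    then have "A \<inter> A' = {} \<or> B \<inter> B' = {}"
      using that zs_partitionsD(3)[OF P, of A A'] zs_partitionsD(3)[OF Q, of B B'] by auto
    then show ?thesis unfolding pq by auto
  qed
  have "x \<in> (\<Union>p\<in>P \<times> Q. (\<lambda>(A, B). A \<inter> B) p)" for x
  proof -
    obtain A B where "A \<in> P" "x \<in> A" "B \<in> Q" "x \<in> B"
      using zs_partitionsD(4)[OF P] zs_partitionsD(4)[OF Q] by blast
    then show ?thesis by blast
  qed
  then show "(\<Union>p\<in>P \<times> Q. (\<lambda>(A, B). A \<inter> B) p) = UNIV" by blast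
qed

lemma oscillation_le_common_refinement:
  "oscillation_le f P \<delta> \<or> oscillation_le f Q \<delta> \<Longrightarrow> oscillation_le f (common_refinement P Q) \<delta>"
  unfolding oscillation_le_def common_refinement_def by blast

lemma exists_partition_oscillation_le:
  assumes f: "f \<in> Cb" and d: "\<delta> > 0"
  shows "\<exists>P\<in>zs_partitions. oscillation_le f P \<delta>"
proof -
  obtain B where B: "\<forall>x. \<bar>f x\<bar> \<le> B" using Cb_bounded[OF f] by blast
  obtain N :: nat where N: "2 * B < real N * \<delta>" using reals_Archimedean3[OF d] by blast
  define S where "S k = {x. - B + real k * \<delta> \<le> f x} - {x. - B + real (Suc k) * \<delta> \<le> f x}" for k
  have "S ` {..<N} - {{}} \<in> zs_partitions"
  proof (rule zs_partitions_image)
    show "S k \<in> zs_algebra" for k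
      unfolding S_def by (intro zs_algebra_Diff zs_algebra_zero_set zero_sets_ge Cb_continuous[OF f])
    have "S k \<inter> S j = {}" if "k < j" for k j
    proof -
      have "real (Suc k) * \<delta> \<le> real j * \<delta>" using that d by (simp add: mult_right_mono)
      then show ?thesis unfolding S_def by auto
    qed
    then show "S k \<inter> S j = {}" if "S k \<noteq> S j" for k j
      using that by (cases k j rule: linorder_cases) auto
    have "x \<in> S (nat \<lfloor>(f x + B) / \<delta>\<rfloor>) \<and> nat \<lfloor>(f x + B) / \<delta>\<rfloor> < N" for x
    proof -
      define k where "k = nat \<lfloor>(f x + B) / \<delta>\<rfloor>"
      have "0 \<le> (f x + B) / \<delta>" using B[rule_format, of x] d by simp
      then have rk: "real k = of_int \<lfloor>(f x + B) / \<delta>\<rfloor>" unfolding k_def by simp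
      then have "real k \<le> (f x + B) / \<delta>" "(f x + B) / \<delta> < real k + 1" by linarith+
      then have l: "real k * \<delta> \<le> f x + B" and u: "f x + B < (real k + 1) * \<delta>"
        using d by (simp_all add: pos_le_divide_eq pos_divide_less_eq)
      then have "real k * \<delta> < real N * \<delta>" using B[rule_format, of x] N by linarith
      then have "k < N" using d by simp
      moreover have "x \<in> S k" unfolding S_def using l u by (simp add: algebra_simps)
      ultimately show ?thesis unfolding k_def by blast
    qed
    then show "(\<Union>k\<in>{..<N}. S k) = UNIV" by blast
  qed simp
  moreover have "oscillation_le f (S ` {..<N} - {{}}) \<delta>"
    unfolding oscillation_le_def S_def by (auto simp: algebra_simps)
  ultimately show ?thesis by blast
qed

lemma exists_common_partition_oscillation_le:
  assumes "finite Fs" "Fs \<subseteq> Cb" "\<delta> > 0"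
  shows "\<exists>P\<in>zs_partitions. \<forall>f\<in>Fs. oscillation_le f P \<delta>"
  using assms
proof (induction Fs rule: finite_induct)
  case empty then show ?case using zs_partitions_UNIV by blast
next
  case (insert g Fs)
  obtain P where P: "P \<in> zs_partitions" "\<forall>f\<in>Fs. oscillation_le f P \<delta>" using insert by auto
  obtain Q where Q: "Q \<in> zs_partitions" "oscillation_le g Q \<delta>" using exists_partition_oscillation_le[of g \<delta>] insert.prems by auto
  show ?case
    using common_refinement_zs_partitions[OF P(1) Q(1)] P(2) Q(2) oscillation_le_common_refinement by blast
qed

lemma tag_sum_linear: "tag_sum \<gamma> (\<lambda>x. a * f x + b * g x) P = a * tag_sum \<gamma> f P + b * tag_sum \<gamma> g P"
  unfolding tag_sum_def by (simp add: sum_distrib_left sum.distrib algebra_simps)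

lemma tag_sum_linear_measure:
  "tag_sum (\<lambda>A. a * \<gamma>1 A + b * \<gamma>2 A) f P = a * tag_sum \<gamma>1 f P + b * tag_sum \<gamma>2 f P"
proof -
  have "tag_sum (\<lambda>A. a * \<gamma>1 A + b * \<gamma>2 A) f P
      = (\<Sum>A\<in>P. a * (f (SOME x. x \<in> A) * \<gamma>1 A) + b * (f (SOME x. x \<in> A) * \<gamma>2 A))"
    unfolding tag_sum_def by (rule sum.cong) (simp_all add: algebra_simps)
  also have "\<dots> = a * tag_sum \<gamma>1 f P + b * tag_sum \<gamma>2 f P"
    unfolding tag_sum_def by (simp add: sum.distrib sum_distrib_left)
  finally show ?thesis .
qed

lemma fa_integral_linear:
  assumes \<gamma>: "fa_prob \<gamma>" and f: "f \<in> Cb" and h: "h \<in> Cb"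
  shows "fa_integral \<gamma> (\<lambda>x. a * f x + b * h x) = a * fa_integral \<gamma> f + b * fa_integral \<gamma> h"
proof (rule eq_linear_comb_if_approx)
  fix \<delta> :: real assume "0 < \<delta>"
  define k where "k = (\<lambda>x. a * f x + b * h x)"
  have k: "k \<in> Cb" unfolding k_def using Cb_add[OF Cb_cmult[OF f] Cb_cmult[OF h]] by simp
  obtain P where P: "P \<in> zs_partitions" "\<forall>u\<in>{f, h, k}. oscillation_le u P \<delta>"
    using exists_common_partition_oscillation_le[of "{f, h, k}" \<delta>] f h k \<open>0 < \<delta>\<close> by auto
  have approx: "\<bar>fa_integral \<gamma> u - tag_sum \<gamma> u P\<bar> \<le> \<delta>" if "u \<in> {f, h, k}" for u
    using fa_integral_tag_sum_approx[OF \<gamma> bdd_fun_Cb P(1)] P(2) that f h k by blast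
  have "tag_sum \<gamma> k P = a * tag_sum \<gamma> f P + b * tag_sum \<gamma> h P"
    unfolding k_def by (rule tag_sum_linear)
  then show "\<exists>x' y' z'. \<bar>fa_integral \<gamma> (\<lambda>x. a * f x + b * h x) - x'\<bar> \<le> \<delta>
      \<and> \<bar>fa_integral \<gamma> f - y'\<bar> \<le> \<delta> \<and> \<bar>fa_integral \<gamma> h - z'\<bar> \<le> \<delta> \<and> x' = a * y' + b * z'"
    using approx[of k] approx[of f] approx[of h]
    by (intro exI[of _ "tag_sum \<gamma> k P"] exI[of _ "tag_sum \<gamma> f P"] exI[of _ "tag_sum \<gamma> h P"])
      (simp add: k_def)
qed

lemma fa_prob_convex_comb:
  fixes \<gamma>1 \<gamma>2 :: "'z::topological_space set \<Rightarrow> real"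
  assumes g1: "fa_prob \<gamma>1" and g2: "fa_prob \<gamma>2" and t: "0 \<le> t" "t \<le> 1"
  shows "fa_prob (\<lambda>A. t * \<gamma>1 A + (1 - t) * \<gamma>2 A)"
  unfolding fa_prob_def
proof (intro conjI ballI impI)
  fix A :: "'z set" assume A: "A \<in> zs_algebra"
  show "0 \<le> t * \<gamma>1 A + (1 - t) * \<gamma>2 A"
    using fa_prob_nonneg[OF g1 A] fa_prob_nonneg[OF g2 A] t by simp
  fix B :: "'z set" assume B: "B \<in> zs_algebra" and d: "A \<inter> B = {}"
  show "t * \<gamma>1 (A \<union> B) + (1 - t) * \<gamma>2 (A \<union> B) = t * \<gamma>1 A + (1 - t) * \<gamma>2 A + (t * \<gamma>1 B + (1 - t) * \<gamma>2 B)"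
    using fa_prob_add[OF g1 A B d] fa_prob_add[OF g2 A B d] by (simp add: algebra_simps)
next
  show "t * \<gamma>1 UNIV + (1 - t) * \<gamma>2 UNIV = 1" using fa_prob_UNIV[OF g1] fa_prob_UNIV[OF g2] by simp
qed

lemma M1_convex_comb:
  fixes \<gamma>1 \<gamma>2 :: "'z::topological_space set \<Rightarrow> real"
  assumes g1: "\<gamma>1 \<in> M1" and g2: "\<gamma>2 \<in> M1" and t: "0 \<le> t" "t \<le> 1"
  shows "(\<lambda>A. t * \<gamma>1 A + (1 - t) * \<gamma>2 A) \<in> M1"
proof -
  have f: "fa_prob (\<lambda>A. t * \<gamma>1 A + (1 - t) * \<gamma>2 A)" by (rule fa_prob_convex_comb[OF M1_fa_prob[OF g1] M1_fa_prob[OF g2] t])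
  have out: "\<forall>A. A \<notin> zs_algebra \<longrightarrow> t * \<gamma>1 A + (1 - t) * \<gamma>2 A = 0"
    using g1 g2 unfolding M1_def by simp
  have reg: "\<forall>A\<in>zs_algebra. \<forall>\<epsilon>>0. \<exists>F\<in>zero_sets. F \<subseteq> A \<and> t * \<gamma>1 (A - F) + (1 - t) * \<gamma>2 (A - F) < \<epsilon>"
  proof (intro ballI allI impI)
    fix A :: "'z set" and \<epsilon> :: real assume A: "A \<in> zs_algebra" and e: "0 < \<epsilon>"
    obtain F1 where F1: "F1 \<in> zero_sets" "F1 \<subseteq> A" "\<gamma>1 (A - F1) < \<epsilon>" using g1 A e unfolding M1_def by blast
    obtain F2 where F2: "F2 \<in> zero_sets" "F2 \<subseteq> A" "\<gamma>2 (A - F2) < \<epsilon>" using g2 A e unfolding M1_def by blast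
    define F where "F = F1 \<union> F2"
    have Fz: "F \<in> zero_sets" unfolding F_def by (rule zero_sets_Un[OF F1(1) F2(1)])
    have AF: "A - F \<in> zs_algebra" by (rule zs_algebra_Diff[OF A zs_algebra_zero_set[OF Fz]])
    have a1: "\<gamma>1 (A - F) \<le> \<gamma>1 (A - F1)"
      by (rule fa_prob_mono[OF M1_fa_prob[OF g1] zs_algebra_Diff[OF A zs_algebra_zero_set[OF F1(1)]] AF]) (auto simp: F_def)
    have a2: "\<gamma>2 (A - F) \<le> \<gamma>2 (A - F2)"
      by (rule fa_prob_mono[OF M1_fa_prob[OF g2] zs_algebra_Diff[OF A zs_algebra_zero_set[OF F2(1)]] AF]) (auto simp: F_def)
    define c where "c = max (\<gamma>1 (A - F)) (\<gamma>2 (A - F))"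
    have "c < \<epsilon>" unfolding c_def using a1 a2 F1(3) F2(3) by linarith
    moreover have "t * \<gamma>1 (A - F) \<le> t * c" unfolding c_def using t by (intro mult_left_mono) auto
    moreover have "(1 - t) * \<gamma>2 (A - F) \<le> (1 - t) * c" unfolding c_def using t by (intro mult_left_mono) auto
    ultimately have "t * \<gamma>1 (A - F) + (1 - t) * \<gamma>2 (A - F) < \<epsilon>" by (simp add: algebra_simps)
    moreover have "F \<subseteq> A" unfolding F_def using F1 F2 by blast
    ultimately show "\<exists>F\<in>zero_sets. F \<subseteq> A \<and> t * \<gamma>1 (A - F) + (1 - t) * \<gamma>2 (A - F) < \<epsilon>" using Fz by blast
  qed
  show ?thesis unfolding M1_def using f out reg unfolding fa_prob_def by blast
qed

lemma fa_integral_convex_comb: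
  fixes \<gamma>1 \<gamma>2 :: "'z::topological_space set \<Rightarrow> real"
  assumes \<gamma>1: "fa_prob \<gamma>1" and \<gamma>2: "fa_prob \<gamma>2" and t: "0 \<le> t" "t \<le> 1" and f: "f \<in> Cb"
  shows "fa_integral (\<lambda>A. t * \<gamma>1 A + (1 - t) * \<gamma>2 A) f = t * fa_integral \<gamma>1 f + (1 - t) * fa_integral \<gamma>2 f"
proof (rule eq_linear_comb_if_approx)
  fix \<delta> :: real assume "0 < \<delta>"
  define \<gamma> where "\<gamma> = (\<lambda>A. t * \<gamma>1 A + (1 - t) * \<gamma>2 A)"
  have \<gamma>: "fa_prob \<gamma>" unfolding \<gamma>_def by (rule fa_prob_convex_comb[OF \<gamma>1 \<gamma>2 t])
  obtain P where P: "P \<in> zs_partitions" "oscillation_le f P \<delta>"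
    using exists_partition_oscillation_le[OF f \<open>0 < \<delta>\<close>] by blast
  have "tag_sum \<gamma> f P = t * tag_sum \<gamma>1 f P + (1 - t) * tag_sum \<gamma>2 f P"
    unfolding \<gamma>_def by (rule tag_sum_linear_measure)
  then show "\<exists>x' y' z'. \<bar>fa_integral (\<lambda>A. t * \<gamma>1 A + (1 - t) * \<gamma>2 A) f - x'\<bar> \<le> \<delta>
      \<and> \<bar>fa_integral \<gamma>1 f - y'\<bar> \<le> \<delta> \<and> \<bar>fa_integral \<gamma>2 f - z'\<bar> \<le> \<delta> \<and> x' = t * y' + (1 - t) * z'"
    using fa_integral_tag_sum_approx[OF \<gamma> bdd_fun_Cb[OF f] P] fa_integral_tag_sum_approx[OF \<gamma>1 bdd_fun_Cb[OF f] P]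
      fa_integral_tag_sum_approx[OF \<gamma>2 bdd_fun_Cb[OF f] P]
    by (intro exI[of _ "tag_sum \<gamma> f P"] exI[of _ "tag_sum \<gamma>1 f P"] exI[of _ "tag_sum \<gamma>2 f P"])
      (simp add: \<gamma>_def)
qed

lemma fa_integral_const: "fa_prob \<gamma> \<Longrightarrow> fa_integral \<gamma> (\<lambda>x. c) = c"
proof -
  assume g: "fa_prob \<gamma>"
  have b: "bdd_fun (\<lambda>x::'a. c)" unfolding bdd_fun_def by blast
  have "lower_sum \<gamma> (\<lambda>x. c) {UNIV} = c" "upper_sum \<gamma> (\<lambda>x. c) {UNIV} = c"
    unfolding lower_sum_def upper_sum_def using fa_prob_UNIV[OF g] by simp_all
  then show ?thesis using lower_sum_le_fa_integral[OF g b zs_partitions_UNIV] fa_integral_le_upper_sum[OF g b zs_partitions_UNIV] by simp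
qed

lemma abs_fa_integral_le:
  assumes g: "fa_prob \<gamma>" and B: "\<And>x. \<bar>f x\<bar> \<le> B"
  shows "\<bar>fa_integral \<gamma> f\<bar> \<le> B"
proof -
  have b: "bdd_fun f" unfolding bdd_fun_def using B by blast
  have "- B \<le> Inf (range f)"
  proof (rule cInf_greatest)
    fix y assume "y \<in> range f"
    then obtain x where "y = f x" by blast
    then show "- B \<le> y" using B[of x] by linarith
  qed simp
  then have l: "- B \<le> lower_sum \<gamma> f {UNIV}" unfolding lower_sum_def using fa_prob_UNIV[OF g] by simp
  have "Sup (range f) \<le> B"
  proof (rule cSup_least)
    fix y assume "y \<in> range f"
    then obtain x where "y = f x" by blast
    then show "y \<le> B" using B[of x] by linarith
  qed simp
  then have u: "upper_sum \<gamma> f {UNIV} \<le> B" unfolding upper_sum_def using fa_prob_UNIV[OF g] by simp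
  show ?thesis using l u lower_sum_le_fa_integral[OF g b zs_partitions_UNIV] fa_integral_le_upper_sum[OF g b zs_partitions_UNIV] by linarith
qed

lemma fa_integral_nonneg:
  assumes g: "fa_prob \<gamma>" and b: "bdd_fun f" and nn: "\<forall>x. 0 \<le> f x"
  shows "0 \<le> fa_integral \<gamma> f"
proof -
  have "0 \<le> Inf (range f)"
    by (rule cInf_greatest) (use nn in auto)
  then have l: "0 \<le> lower_sum \<gamma> f {UNIV}" unfolding lower_sum_def using fa_prob_UNIV[OF g] by simp
  show ?thesis using l lower_sum_le_fa_integral[OF g b zs_partitions_UNIV] by linarith
qed

lemma fa_integral_mono:
  assumes g: "fa_prob \<gamma>" and f: "f \<in> Cb" and h: "h \<in> Cb" and le: "\<forall>x. f x \<le> h x"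
  shows "fa_integral \<gamma> f \<le> fa_integral \<gamma> h"
proof -
  have d: "(\<lambda>x. 1 * h x + (-1) * f x) \<in> Cb" using Cb_diff[OF h f] by simp
  have "0 \<le> fa_integral \<gamma> (\<lambda>x. 1 * h x + (-1) * f x)"
    by (rule fa_integral_nonneg[OF g bdd_fun_Cb[OF d]]) (use le in auto)
  also have "\<dots> = fa_integral \<gamma> h - fa_integral \<gamma> f" using fa_integral_linear[OF g h f, of 1 "-1"] by simp
  finally show ?thesis by simp
qed

lemma fa_prob_le_fa_integral:
  assumes g: "fa_prob \<gamma>" and b: "bdd_fun h" and nn: "\<forall>x. 0 \<le> h x" and F: "F \<in> zs_algebra"
    and one: "\<forall>x\<in>F. 1 \<le> h x"
  shows "\<gamma> F \<le> fa_integral \<gamma> h"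
proof (cases "F = {}")
  case True then show ?thesis using fa_prob_empty[OF g] fa_integral_nonneg[OF g b nn] by simp
next
  case Fne: False
  show ?thesis
  proof (cases "F = UNIV")
    case True
    have "1 \<le> Inf (range h)" by (rule cInf_greatest) (use one True in auto)
    then have "1 \<le> lower_sum \<gamma> h {UNIV}" unfolding lower_sum_def using fa_prob_UNIV[OF g] by simp
    then show ?thesis using True fa_prob_UNIV[OF g] lower_sum_le_fa_integral[OF g b zs_partitions_UNIV] by simp
  next
    case False
    have P: "{F, -F} \<in> zs_partitions" unfolding zs_partitions_def disjoint_def
      using F zs_algebra_Compl[OF F] Fne False by auto
    have FF: "F \<noteq> -F" using Fne by auto
    have "1 \<le> Inf (h ` F)" by (rule cInf_greatest) (use one Fne in auto)
    moreover have "0 \<le> Inf (h ` (-F))" by (rule cInf_greatest) (use nn False in auto)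
    moreover note fa_prob_nonneg[OF g F] fa_prob_nonneg[OF g zs_algebra_Compl[OF F]]
    ultimately have a1: "\<gamma> F \<le> Inf (h ` F) * \<gamma> F" and a2: "0 \<le> Inf (h ` (-F)) * \<gamma> (-F)"
      using mult_right_mono[of 1 "Inf (h ` F)" "\<gamma> F"] by simp_all
    have "lower_sum \<gamma> h {F, -F} = Inf (h ` F) * \<gamma> F + Inf (h ` (-F)) * \<gamma> (-F)"
      unfolding lower_sum_def using FF by simp
    then have "\<gamma> F \<le> lower_sum \<gamma> h {F, -F}" using a1 a2 by linarith
    then show ?thesis using lower_sum_le_fa_integral[OF g b P] by linarith
  qed
qed

lemma fa_integral_sum: assumes g: "fa_prob \<gamma>" shows "finite I \<Longrightarrow> (\<And>i. i \<in> I \<Longrightarrow> f i \<in> Cb) \<Longrightarrow>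
    fa_integral \<gamma> (\<lambda>x. \<Sum>i\<in>I. f i x) = (\<Sum>i\<in>I. fa_integral \<gamma> (f i))"
proof (induction I rule: finite_induct)
  case empty
  then show ?case using fa_integral_const[OF g, of 0] by simp
next
  case (insert j I)
  have "fa_integral \<gamma> (\<lambda>x. \<Sum>i\<in>insert j I. f i x) = fa_integral \<gamma> (\<lambda>x. 1 * f j x + 1 * (\<Sum>i\<in>I. f i x))"
    using insert.hyps by simp
  also have "\<dots> = fa_integral \<gamma> (f j) + fa_integral \<gamma> (\<lambda>x. \<Sum>i\<in>I. f i x)"
    using fa_integral_linear[OF g, of "f j" "\<lambda>x. \<Sum>i\<in>I. f i x" 1 1] insert.prems Cb_sum[OF insert.hyps(1), of f]
    by simp
  finally show ?case using insert by simp
qed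

section \<open>Representation of positive functionals\<close>

locale positive_functional =
  fixes L :: "('z::topological_space \<Rightarrow> real) \<Rightarrow> real"
  assumes L_lin: "f \<in> Cb \<Longrightarrow> g \<in> Cb \<Longrightarrow> L (\<lambda>x. a * f x + b * g x) = a * L f + b * L g"
    and L_pos: "f \<in> Cb \<Longrightarrow> \<forall>x. 0 \<le> f x \<Longrightarrow> 0 \<le> L f"
    and L_one: "L (\<lambda>x. 1) = 1"
begin

lemma L_add: "f \<in> Cb \<Longrightarrow> g \<in> Cb \<Longrightarrow> L (\<lambda>x. f x + g x) = L f + L g"
  using L_lin[of f g 1 1] by simp

lemma L_cmult: "f \<in> Cb \<Longrightarrow> L (\<lambda>x. c * f x) = c * L f"
  using L_lin[of f f c 0] by simp

lemma L_mono: "f \<in> Cb \<Longrightarrow> g \<in> Cb \<Longrightarrow> \<forall>x. f x \<le> g x \<Longrightarrow> L f \<le> L g"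
proof -
  assume f: "f \<in> Cb" and g: "g \<in> Cb" and le: "\<forall>x. f x \<le> g x"
  have "0 \<le> L (\<lambda>x. 1 * g x + (-1) * f x)"
    by (rule L_pos) (use Cb_diff[OF g f] le in auto)
  then show ?thesis using L_lin[OF g f, of 1 "-1"] by simp
qed

lemma L_sum: "finite I \<Longrightarrow> (\<And>i. i \<in> I \<Longrightarrow> f i \<in> Cb) \<Longrightarrow> L (\<lambda>x. \<Sum>i\<in>I. f i x) = (\<Sum>i\<in>I. L (f i))"
proof (induction I rule: finite_induct)
  case empty
  then show ?case using L_cmult[of "\<lambda>x. 1" 0] by simp
next
  case (insert j I)
  have "L (\<lambda>x. \<Sum>i\<in>insert j I. f i x) = L (\<lambda>x. f j x + (\<Sum>i\<in>I. f i x))"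
    using insert.hyps by simp
  also have "\<dots> = L (f j) + L (\<lambda>x. \<Sum>i\<in>I. f i x)"
    by (rule L_add) (use insert.prems Cb_sum[OF insert.hyps(1), of f] in auto)
  finally show ?case using insert by simp
qed

text \<open>Alexandroff's construction: a zero set \<open>F\<close> gets the content \<open>inf {L h | h \<ge> 0, h \<ge> 1 on F}\<close>,
  and the representing probability is the inner regularisation of this content by zero sets.\<close>
definition majorants :: "'z set \<Rightarrow> ('z \<Rightarrow> real) set" where
  "majorants F = {h\<in>Cb. (\<forall>x. 0 \<le> h x) \<and> (\<forall>x\<in>F. 1 \<le> h x)}"

definition zs_content :: "'z set \<Rightarrow> real" where
  "zs_content F = Inf (L ` majorants F)"

lemma one_majorants: "(\<lambda>x. 1) \<in> majorants F"
  unfolding majorants_def by simp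

lemma majorants_L_nonneg: "h \<in> majorants F \<Longrightarrow> 0 \<le> L h"
  unfolding majorants_def using L_pos by blast

lemma bdd_below_L_majorants: "bdd_below (L ` majorants F)"
  unfolding bdd_below_def using majorants_L_nonneg by blast

lemma zs_content_le: "h \<in> majorants F \<Longrightarrow> zs_content F \<le> L h"
  unfolding zs_content_def by (rule cInf_lower) (use bdd_below_L_majorants in auto)

lemma zs_content_nonneg: "0 \<le> zs_content F"
  unfolding zs_content_def by (rule cInf_greatest) (use one_majorants majorants_L_nonneg in auto)

lemma zs_content_le_1: "zs_content F \<le> 1"
  using zs_content_le[OF one_majorants] L_one by simp

lemma zs_content_approx: "\<epsilon> > 0 \<Longrightarrow> \<exists>h\<in>majorants F. L h < zs_content F + \<epsilon>"
  using cInf_lessD[of "L ` majorants F" "zs_content F + \<epsilon>"] one_majorants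
  unfolding zs_content_def by auto

lemma zs_content_mono: "F \<subseteq> G \<Longrightarrow> zs_content F \<le> zs_content G"
  unfolding zs_content_def[of G]
proof (rule cInf_greatest)
  assume FG: "F \<subseteq> G"
  show "L ` majorants G \<noteq> {}" using one_majorants by blast
  fix y assume "y \<in> L ` majorants G"
  then obtain h where h: "h \<in> majorants G" "y = L h" by blast
  then have "h \<in> majorants F" using FG unfolding majorants_def by blast
  then show "zs_content F \<le> y" using h zs_content_le by simp
qed

lemma L_le_zs_content:
  assumes g: "g \<in> Cb" and g1: "\<forall>x. g x \<le> 1" and g0: "\<forall>x. x \<notin> F \<longrightarrow> g x \<le> 0"
  shows "L g \<le> zs_content F"
  unfolding zs_content_def
proof (rule cInf_greatest)
  show "L ` majorants F \<noteq> {}" using one_majorants by blast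
  fix y assume "y \<in> L ` majorants F"
  then obtain h where h: "h \<in> majorants F" "y = L h" by blast
  have "\<forall>x. g x \<le> h x"
  proof
    fix x show "g x \<le> h x"
    proof (cases "x \<in> F")
      case True
      then have "1 \<le> h x" using h(1) unfolding majorants_def by blast
      moreover have "g x \<le> 1" using g1 by blast
      ultimately show ?thesis by linarith
    next
      case False
      then have "g x \<le> 0" using g0 by blast
      moreover have "0 \<le> h x" using h(1) unfolding majorants_def by blast
      ultimately show ?thesis by linarith
    qed
  qed
  then show "L g \<le> y" using h L_mono[OF g] unfolding majorants_def by blast
qed

lemma zs_content_UNIV: "zs_content UNIV = 1"
proof -
  have "1 \<le> zs_content UNIV"
    unfolding zs_content_def
  proof (rule cInf_greatest)
    show "L ` majorants UNIV \<noteq> {}" using one_majorants by blast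
    fix y assume "y \<in> L ` majorants UNIV"
    then obtain h where h: "h \<in> majorants UNIV" "y = L h" by blast
    then have "L (\<lambda>x. 1) \<le> L h" using L_mono[of "\<lambda>x. 1" h] unfolding majorants_def by auto
    then show "1 \<le> y" using h L_one by simp
  qed
  then show ?thesis using zs_content_le_1[of UNIV] by simp
qed

lemma zs_content_submodular: "zs_content (F \<union> G) + zs_content (F \<inter> G) \<le> zs_content F + zs_content G"
proof (rule field_le_epsilon)
  fix e :: real assume e: "0 < e"
  obtain h1 where h1: "h1 \<in> majorants F" "L h1 < zs_content F + e/2" using zs_content_approx[of "e/2" F] e by auto
  obtain h2 where h2: "h2 \<in> majorants G" "L h2 < zs_content G + e/2" using zs_content_approx[of "e/2" G] e by auto
  have c1: "h1 \<in> Cb" and c2: "h2 \<in> Cb" using h1 h2 unfolding majorants_def by auto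
  have "(\<lambda>x. max (h1 x) (h2 x)) \<in> majorants (F \<union> G)"
    using h1(1) h2(1) Cb_max[OF c1 c2] unfolding majorants_def by (auto simp: le_max_iff_disj)
  then have a: "zs_content (F \<union> G) \<le> L (\<lambda>x. max (h1 x) (h2 x))" by (rule zs_content_le)
  have "(\<lambda>x. min (h1 x) (h2 x)) \<in> majorants (F \<inter> G)"
    using h1(1) h2(1) Cb_min[OF c1 c2] unfolding majorants_def by auto
  then have b: "zs_content (F \<inter> G) \<le> L (\<lambda>x. min (h1 x) (h2 x))" by (rule zs_content_le)
  have "L (\<lambda>x. max (h1 x) (h2 x)) + L (\<lambda>x. min (h1 x) (h2 x)) = L (\<lambda>x. max (h1 x) (h2 x) + min (h1 x) (h2 x))"
    using L_add[OF Cb_max[OF c1 c2] Cb_min[OF c1 c2]] by simp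
  also have "(\<lambda>x. max (h1 x) (h2 x) + min (h1 x) (h2 x)) = (\<lambda>x. h1 x + h2 x)"
    by (rule ext) simp
  also have "L \<dots> = L h1 + L h2" using L_add[OF c1 c2] .
  finally show "zs_content (F \<union> G) + zs_content (F \<inter> G) \<le> zs_content F + zs_content G + e" using a b h1 h2 by linarith
qed

lemma zs_content_subadditive: "zs_content (F \<union> G) \<le> zs_content F + zs_content G"
  using zs_content_submodular[of F G] zs_content_nonneg[of "F \<inter> G"] by linarith

lemma zs_content_disjoint:
  assumes F: "F \<in> zero_sets" and G: "G \<in> zero_sets" and d: "F \<inter> G = {}"
  shows "zs_content F + zs_content G \<le> zs_content (F \<union> G)"
proof (rule field_le_epsilon)
  fix e :: real assume e: "0 < e"
  obtain h where h: "h \<in> majorants (F \<union> G)" "L h < zs_content (F \<union> G) + e" using zs_content_approx[of e] e by auto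
  have hc: "h \<in> Cb" using h unfolding majorants_def by auto
  obtain u where u: "u \<in> Cb" "\<And>x. 0 \<le> u x \<and> u x \<le> 1" "\<And>x. x \<in> F \<Longrightarrow> u x = 1"
    "\<And>x. x \<in> G \<Longrightarrow> u x = 0"
    using zero_sets_separation[OF F G d] by blast
  have c1: "(\<lambda>x. h x * u x) \<in> Cb" using Cb_mult[OF hc u(1)] .
  have c2: "(\<lambda>x. h x * (1 - u x)) \<in> Cb" using Cb_mult[OF hc Cb_diff[OF Cb_const u(1)]] .
  have "(\<lambda>x. h x * u x) \<in> majorants F"
    using h(1) u c1 unfolding majorants_def by auto
  then have a: "zs_content F \<le> L (\<lambda>x. h x * u x)" by (rule zs_content_le)
  have "(\<lambda>x. h x * (1 - u x)) \<in> majorants G"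
    using h(1) u c2 unfolding majorants_def by auto
  then have b: "zs_content G \<le> L (\<lambda>x. h x * (1 - u x))" by (rule zs_content_le)
  have "L (\<lambda>x. h x * u x) + L (\<lambda>x. h x * (1 - u x)) = L (\<lambda>x. h x * u x + h x * (1 - u x))"
    using L_add[OF c1 c2] by simp
  also have "(\<lambda>x. h x * u x + h x * (1 - u x)) = h" by (rule ext) (simp add: algebra_simps)
  finally show "zs_content F + zs_content G \<le> zs_content (F \<union> G) + e" using a b h by linarith
qed

lemma zs_content_cut_by_majorant:
  assumes h: "h \<in> majorants K" and s: "0 < s"
  shows "zs_content H \<le> zs_content (H \<inter> {x. h x \<le> s}) + L h / s"
proof -
  have hC: "h \<in> Cb" using h unfolding majorants_def by auto
  have "(\<lambda>x. (1/s) * h x) \<in> majorants {x. s \<le> h x}"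
    using h s Cb_cmult[OF hC, of "1/s"] unfolding majorants_def by (auto simp: field_simps)
  then have "zs_content {x. s \<le> h x} \<le> L (\<lambda>x. (1/s) * h x)" by (rule zs_content_le)
  also have "\<dots> = L h / s" using L_cmult[OF hC, of "1/s"] by simp
  finally have cut: "zs_content {x. s \<le> h x} \<le> L h / s" .
  have "H \<subseteq> (H \<inter> {x. h x \<le> s}) \<union> {x. s \<le> h x}" by auto
  then have "zs_content H \<le> zs_content ((H \<inter> {x. h x \<le> s}) \<union> {x. s \<le> h x})" by (rule zs_content_mono)
  also have "\<dots> \<le> zs_content (H \<inter> {x. h x \<le> s}) + zs_content {x. s \<le> h x}" by (rule zs_content_subadditive)
  finally show ?thesis using cut by linarith
qed

text \<open>Cut \<open>H\<close> at a level slightly below 1 of a nearly optimal majorant of \<open>K\<close>.\<close>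
lemma zs_content_inner_approx:
  assumes H: "H \<in> zero_sets" and \<epsilon>: "0 < \<epsilon>"
  obtains G where "G \<in> zero_sets" "G \<subseteq> H" "G \<inter> K = {}" "zs_content H < zs_content G + zs_content K + \<epsilon>"
proof -
  define e where "e = min (\<epsilon>/3) (1/2)"
  have e: "0 < e" "3 * e \<le> \<epsilon>" unfolding e_def using \<epsilon> by auto
  obtain h where h: "h \<in> majorants K" "L h < zs_content K + e" using zs_content_approx[OF e(1)] by blast
  define s where "s = 1 / (1 + e)"
  have s: "0 < s" "s < 1" unfolding s_def using e by auto
  define G where "G = H \<inter> {x. h x \<le> s}"
  have "continuous_on UNIV h" using h(1) unfolding majorants_def by (auto simp: Cb_iff)
  then have "G \<in> zero_sets" unfolding G_def by (intro zero_sets_Int[OF H] zero_sets_le)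
  moreover have "G \<subseteq> H" unfolding G_def by blast
  moreover have "G \<inter> K = {}" using h(1) s unfolding G_def majorants_def by force
  moreover have "L h / s < zs_content K + \<epsilon>"
  proof -
    have "L h / s = L h * (1 + e)" unfolding s_def by simp
    also have "\<dots> < (zs_content K + e) * (1 + e)" using h(2) e by (intro mult_strict_right_mono) auto
    also have "\<dots> = zs_content K + e * (1 + zs_content K + e)" by (simp add: algebra_simps)
    also have "\<dots> \<le> zs_content K + e * 3"
      using zs_content_le_1[of K] e unfolding e_def by (intro add_left_mono mult_left_mono) auto
    finally show ?thesis using e(2) by linarith
  qed
  then have "zs_content H < zs_content G + zs_content K + \<epsilon>"
    using zs_content_cut_by_majorant[OF h(1) s(1), of H] unfolding G_def by linarith
  ultimately show thesis by (rule that)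
qed

lemma zs_content_supermodular:
  assumes F: "F \<in> zero_sets" and G: "G \<in> zero_sets"
  shows "zs_content F + zs_content G \<le> zs_content (F \<union> G) + zs_content (F \<inter> G)"
proof (rule field_le_epsilon)
  fix e :: real assume "0 < e"
  then obtain G' where G': "G' \<in> zero_sets" "G' \<subseteq> G" "G' \<inter> (F \<inter> G) = {}"
    "zs_content G < zs_content G' + zs_content (F \<inter> G) + e"
    using zs_content_inner_approx[OF G \<open>0 < e\<close>, of "F \<inter> G"] by blast
  have "F \<inter> G' = {}" using G'(2,3) by blast
  then have "zs_content F + zs_content G' \<le> zs_content (F \<union> G')" by (rule zs_content_disjoint[OF F G'(1)])
  also have "\<dots> \<le> zs_content (F \<union> G)" using G'(2) by (intro zs_content_mono) blast
  finally show "zs_content F + zs_content G \<le> zs_content (F \<union> G) + zs_content (F \<inter> G) + e" using G'(4) by linarith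
qed

lemma zs_content_modular:
  assumes F: "F \<in> zero_sets" and G: "G \<in> zero_sets"
  shows "zs_content (F \<union> G) + zs_content (F \<inter> G) = zs_content F + zs_content G"
  using zs_content_submodular[of F G] zs_content_supermodular[OF F G] by linarith

text \<open>Inner approximability of a set and of its complement by zero sets, up to total content 1.
  These sets form an algebra containing the zero sets; this is what makes \<open>rep_prob\<close> additive.\<close>
definition zs_content_regular :: "'z set \<Rightarrow> bool" where
  "zs_content_regular A \<longleftrightarrow> (\<forall>\<epsilon>>0. \<exists>F G. F \<in> zero_sets \<and> G \<in> zero_sets \<and> F \<subseteq> A \<and> G \<subseteq> - A
      \<and> 1 - \<epsilon> < zs_content F + zs_content G)"

lemma zs_content_regularI:
  assumes "\<And>\<epsilon>. 0 < \<epsilon> \<Longrightarrow> \<exists>F G. F \<in> zero_sets \<and> G \<in> zero_sets \<and> F \<subseteq> A \<and> G \<subseteq> - A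
      \<and> 1 - \<epsilon> < zs_content F + zs_content G"
  shows "zs_content_regular A"
  using assms unfolding zs_content_regular_def by blast

lemma zs_content_regularE:
  assumes "zs_content_regular A" "0 < \<epsilon>"
  obtains F G where "F \<in> zero_sets" "G \<in> zero_sets" "F \<subseteq> A" "G \<subseteq> - A"
    "1 - \<epsilon> < zs_content F + zs_content G"
  using assms unfolding zs_content_regular_def by blast

lemma zs_content_regular_zero_set:
  assumes K: "K \<in> zero_sets"
  shows "zs_content_regular K"
proof (rule zs_content_regularI)
  fix \<epsilon> :: real assume "0 < \<epsilon>"
  then obtain G where G: "G \<in> zero_sets" "G \<subseteq> UNIV" "G \<inter> K = {}"
    "zs_content UNIV < zs_content G + zs_content K + \<epsilon>"
    by (rule zs_content_inner_approx[OF zero_sets_UNIV])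
  have "G \<subseteq> - K" using G(3) by blast
  moreover have "1 - \<epsilon> < zs_content K + zs_content G" using G(4) zs_content_UNIV by linarith
  ultimately show "\<exists>F G. F \<in> zero_sets \<and> G \<in> zero_sets \<and> F \<subseteq> K \<and> G \<subseteq> - K
      \<and> 1 - \<epsilon> < zs_content F + zs_content G"
    using K G(1) by (intro exI[of _ K] exI[of _ G]) simp
qed

lemma zs_content_regular_Compl:
  assumes "zs_content_regular A"
  shows "zs_content_regular (- A)"
proof (rule zs_content_regularI)
  fix \<epsilon> :: real assume "0 < \<epsilon>"
  then obtain F G where "F \<in> zero_sets" "G \<in> zero_sets" "F \<subseteq> A" "G \<subseteq> - A"
    "1 - \<epsilon> < zs_content F + zs_content G"
    by (rule zs_content_regularE[OF assms])
  then show "\<exists>G F. G \<in> zero_sets \<and> F \<in> zero_sets \<and> G \<subseteq> - A \<and> F \<subseteq> - (- A)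
      \<and> 1 - \<epsilon> < zs_content G + zs_content F"
    by (intro exI[of _ G] exI[of _ F]) (simp add: add.commute)
qed

lemma zs_content_regular_Un:
  assumes A: "zs_content_regular A" and B: "zs_content_regular B"
  shows "zs_content_regular (A \<union> B)"
proof (rule zs_content_regularI)
  fix \<epsilon> :: real assume "0 < \<epsilon>"
  then have e2: "0 < \<epsilon>/2" by simp
  obtain F1 G1 where 1: "F1 \<in> zero_sets" "G1 \<in> zero_sets" "F1 \<subseteq> A" "G1 \<subseteq> - A"
    "1 - \<epsilon>/2 < zs_content F1 + zs_content G1"
    by (rule zs_content_regularE[OF A e2])
  obtain F2 G2 where 2: "F2 \<in> zero_sets" "G2 \<in> zero_sets" "F2 \<subseteq> B" "G2 \<subseteq> - B"
    "1 - \<epsilon>/2 < zs_content F2 + zs_content G2"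
    by (rule zs_content_regularE[OF B e2])
  have "zs_content (F1 \<inter> F2) + zs_content (G1 \<union> G2) \<le> zs_content ((F1 \<inter> F2) \<union> (G1 \<union> G2))"
    using 1 2 by (intro zs_content_disjoint zero_sets_Int zero_sets_Un) auto
  also have "\<dots> \<le> 1" by (rule zs_content_le_1)
  finally have "1 - \<epsilon> < zs_content (F1 \<union> F2) + zs_content (G1 \<inter> G2)"
    using zs_content_modular[OF 1(1) 2(1)] zs_content_modular[OF 1(2) 2(2)] 1(5) 2(5) by linarith
  moreover have "F1 \<union> F2 \<in> zero_sets" "G1 \<inter> G2 \<in> zero_sets" "F1 \<union> F2 \<subseteq> A \<union> B" "G1 \<inter> G2 \<subseteq> - (A \<union> B)"
    using 1 2 by (auto intro: zero_sets_Un zero_sets_Int)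
  ultimately show "\<exists>F G. F \<in> zero_sets \<and> G \<in> zero_sets \<and> F \<subseteq> A \<union> B \<and> G \<subseteq> - (A \<union> B)
      \<and> 1 - \<epsilon> < zs_content F + zs_content G"
    by blast
qed

lemma zs_content_regular_zs_algebra: "A \<in> zs_algebra \<Longrightarrow> zs_content_regular A"
proof -
  assume A: "A \<in> zs_algebra"
  have "algebra UNIV {A. zs_content_regular A}"
    unfolding algebra_iff_Un
  proof (intro conjI ballI)
    show "{A. zs_content_regular A} \<subseteq> Pow UNIV" by simp
    show "{} \<in> {A. zs_content_regular A}" using zs_content_regular_zero_set[OF zero_sets_empty] by simp
    fix a assume "a \<in> {A. zs_content_regular A}"
    then show "UNIV - a \<in> {A. zs_content_regular A}" using zs_content_regular_Compl by (simp add: Compl_eq_Diff_UNIV[symmetric])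
    fix b assume "b \<in> {A. zs_content_regular A}"
    then show "a \<union> b \<in> {A. zs_content_regular A}" using zs_content_regular_Un \<open>a \<in> {A. zs_content_regular A}\<close> by simp
  qed
  moreover have "zero_sets \<subseteq> {A. zs_content_regular A}" using zs_content_regular_zero_set by blast
  ultimately have "zs_algebra \<subseteq> {A. zs_content_regular A}" by (rule zs_algebra_minimal)
  then show ?thesis using A by blast
qed

definition rep_prob :: "'z set \<Rightarrow> real" where
  "rep_prob A = (if A \<in> zs_algebra then Sup (zs_content ` {F. F \<in> zero_sets \<and> F \<subseteq> A}) else 0)"

lemma zs_content_le_rep_prob: "A \<in> zs_algebra \<Longrightarrow> F \<in> zero_sets \<Longrightarrow> F \<subseteq> A \<Longrightarrow> zs_content F \<le> rep_prob A"
  unfolding rep_prob_def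
  by (simp, rule cSup_upper) (auto simp: bdd_above_def intro: zs_content_le_1)

lemma rep_prob_le: "A \<in> zs_algebra \<Longrightarrow> (\<And>F. F \<in> zero_sets \<Longrightarrow> F \<subseteq> A \<Longrightarrow> zs_content F \<le> c) \<Longrightarrow> rep_prob A \<le> c"
  unfolding rep_prob_def
  by (simp, rule cSup_least) (use zero_sets_empty in blast)+

lemma rep_prob_zero_set: "F \<in> zero_sets \<Longrightarrow> rep_prob F = zs_content F"
  using zs_content_le_rep_prob[OF zs_algebra_zero_set, of F F] rep_prob_le[OF zs_algebra_zero_set, of F "zs_content F"] zs_content_mono by force

lemma rep_prob_approx:
  assumes A: "A \<in> zs_algebra" and e: "\<epsilon> > 0"
  shows "\<exists>F\<in>zero_sets. F \<subseteq> A \<and> rep_prob A < zs_content F + \<epsilon>"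
proof (rule ccontr)
  assume "\<not> ?thesis"
  then have "\<And>F. F \<in> zero_sets \<Longrightarrow> F \<subseteq> A \<Longrightarrow> zs_content F \<le> rep_prob A - \<epsilon>" by force
  then have "rep_prob A \<le> rep_prob A - \<epsilon>" by (rule rep_prob_le[OF A])
  then show False using e by simp
qed

lemma rep_prob_nonneg: "0 \<le> rep_prob A"
proof (cases "A \<in> zs_algebra")
  case True then show ?thesis using zs_content_le_rep_prob[OF True zero_sets_empty] zs_content_nonneg[of "{}"] by simp
next
  case False then show ?thesis by (simp add: rep_prob_def)
qed

lemma rep_prob_add:
  assumes A: "A \<in> zs_algebra" and B: "B \<in> zs_algebra" and d: "A \<inter> B = {}"
  shows "rep_prob (A \<union> B) = rep_prob A + rep_prob B"
proof (rule antisym)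
  have AB: "A \<union> B \<in> zs_algebra" using zs_algebra_Un[OF A B] .
  show "rep_prob A + rep_prob B \<le> rep_prob (A \<union> B)"
  proof (rule field_le_epsilon)
    fix e :: real assume e: "0 < e"
    obtain F where F: "F \<in> zero_sets" "F \<subseteq> A" "rep_prob A < zs_content F + e/2" using rep_prob_approx[OF A, of "e/2"] e by auto
    obtain G where G: "G \<in> zero_sets" "G \<subseteq> B" "rep_prob B < zs_content G + e/2" using rep_prob_approx[OF B, of "e/2"] e by auto
    have "F \<inter> G = {}" using F G d by blast
    then have "zs_content F + zs_content G \<le> zs_content (F \<union> G)" by (rule zs_content_disjoint[OF F(1) G(1)])
    also have "\<dots> \<le> rep_prob (A \<union> B)" using zs_content_le_rep_prob[OF AB zero_sets_Un[OF F(1) G(1)]] F G by blast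
    finally show "rep_prob A + rep_prob B \<le> rep_prob (A \<union> B) + e" using F G by linarith
  qed
  show "rep_prob (A \<union> B) \<le> rep_prob A + rep_prob B"
  proof (rule rep_prob_le[OF AB])
    fix H assume H: "H \<in> zero_sets" "H \<subseteq> A \<union> B"
    show "zs_content H \<le> rep_prob A + rep_prob B"
    proof (rule field_le_epsilon)
      fix e :: real assume e: "0 < e"
      obtain F G where FG: "F \<in> zero_sets" "G \<in> zero_sets" "F \<subseteq> A" "G \<subseteq> - A" "1 - e < zs_content F + zs_content G"
        by (rule zs_content_regularE[OF zs_content_regular_zs_algebra[OF A] e])
      have mod: "zs_content (H \<union> G) + zs_content (H \<inter> G) = zs_content H + zs_content G" by (rule zs_content_modular[OF H(1) FG(2)])
      have "H \<inter> G \<subseteq> B" using H FG by blast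
      then have "zs_content (H \<inter> G) \<le> rep_prob B" using zs_content_le_rep_prob[OF B zero_sets_Int[OF H(1) FG(2)]] by blast
      moreover have "zs_content F \<le> rep_prob A" by (rule zs_content_le_rep_prob[OF A FG(1) FG(3)])
      moreover have "zs_content (H \<union> G) \<le> 1" by (rule zs_content_le_1)
      ultimately show "zs_content H \<le> rep_prob A + rep_prob B + e" using mod FG(5) by linarith
    qed
  qed
qed

lemma rep_prob_UNIV: "rep_prob UNIV = 1"
  using rep_prob_zero_set[OF zero_sets_UNIV] zs_content_UNIV by simp

lemma rep_prob_M1: "rep_prob \<in> M1"
  unfolding M1_def
proof (intro CollectI conjI allI impI ballI)
  fix A :: "'z set"
  show "A \<notin> zs_algebra \<Longrightarrow> rep_prob A = 0" by (simp add: rep_prob_def)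
  show "0 \<le> rep_prob A" by (rule rep_prob_nonneg)
next
  fix A B :: "'z set" assume "A \<in> zs_algebra" "B \<in> zs_algebra" "A \<inter> B = {}"
  then show "rep_prob (A \<union> B) = rep_prob A + rep_prob B" by (rule rep_prob_add)
next
  show "rep_prob UNIV = 1" by (rule rep_prob_UNIV)
next
  fix A :: "'z set" and \<epsilon> :: real assume A: "A \<in> zs_algebra" and e: "0 < \<epsilon>"
  obtain F where F: "F \<in> zero_sets" "F \<subseteq> A" "rep_prob A < zs_content F + \<epsilon>" using rep_prob_approx[OF A e] by blast
  have D: "A - F \<in> zs_algebra" using zs_algebra_Diff[OF A zs_algebra_zero_set[OF F(1)]] .
  have "rep_prob A = rep_prob (F \<union> (A - F))" using F(2) by (simp add: Un_absorb1 Un_Diff_cancel)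
  also have "\<dots> = rep_prob F + rep_prob (A - F)" by (rule rep_prob_add[OF zs_algebra_zero_set[OF F(1)] D]) blast
  finally have "rep_prob (A - F) < \<epsilon>" using rep_prob_zero_set[OF F(1)] F(3) by linarith
  then show "\<exists>F\<in>zero_sets. F \<subseteq> A \<and> rep_prob (A - F) < \<epsilon>" using F by blast
qed

lemma fa_prob_rep_prob: "fa_prob rep_prob"
  by (rule M1_fa_prob[OF rep_prob_M1])

text \<open>Cut \<open>f\<close> into layers \<open>g k\<close> of height \<open>\<delta>\<close>. Each layer is trapped between the zero sets
  \<open>F (Suc k) \<subseteq> F k\<close>, so \<open>L\<close> and the integral differ on it by at most
  \<open>zs_content (F k) - zs_content (F (Suc k))\<close>, and these differences telescope to at most 1.\<close>

lemma L_le_fa_integral_rep_prob: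
  assumes f: "f \<in> Cb"
  shows "L f \<le> fa_integral rep_prob f"
proof (rule field_le_epsilon)
  fix \<delta> :: real assume d: "0 < \<delta>"
  obtain u c N where uC: "u \<in> Cb" and f_eq: "\<And>x. f x = c + \<delta> * (\<Sum>k<N. min 1 (max 0 (u x - real k)))"
    using Cb_layer_decomposition[OF f d] by blast
  define g where "g k x = min 1 (max 0 (u x - real k))" for k :: nat and x
  define F where "F k = {x. real k \<le> u x}" for k :: nat
  have gC: "g k \<in> Cb" for k unfolding g_def by (intro Cb_clamp Cb_diff uC Cb_const)
  have sC: "(\<lambda>x. \<Sum>k<N. g k x) \<in> Cb" by (rule Cb_sum) (use gC in auto)
  have feq: "f = (\<lambda>x. c * 1 + \<delta> * (\<Sum>k<N. g k x))" by (rule ext) (simp add: f_eq g_def)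
  have Lf: "L f = c + \<delta> * (\<Sum>k<N. L (g k))"
    using L_lin[of "\<lambda>x. 1" "\<lambda>x. \<Sum>k<N. g k x" c \<delta>] sC L_one L_sum[of "{..<N}" g] gC feq by simp
  have If: "fa_integral rep_prob f = c + \<delta> * (\<Sum>k<N. fa_integral rep_prob (g k))"
    using fa_integral_linear[OF fa_prob_rep_prob, of "\<lambda>x. 1" "\<lambda>x. \<Sum>k<N. g k x" c \<delta>] sC
      fa_integral_const[OF fa_prob_rep_prob, of 1] fa_integral_sum[OF fa_prob_rep_prob, of "{..<N}" g] gC feq
    by simp
  have Fz: "F k \<in> zero_sets" for k unfolding F_def by (rule zero_sets_ge[OF Cb_continuous[OF uC]])
  have Lg: "L (g k) \<le> zs_content (F k)" for k
    by (rule L_le_zs_content[OF gC]) (simp_all add: g_def F_def)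
  have Ig: "zs_content (F (Suc k)) \<le> fa_integral rep_prob (g k)" for k
  proof -
    have "rep_prob (F (Suc k)) \<le> fa_integral rep_prob (g k)"
      by (rule fa_prob_le_fa_integral[OF fa_prob_rep_prob bdd_fun_Cb[OF gC] _ zs_algebra_zero_set[OF Fz]])
        (simp_all add: g_def F_def)
    then show ?thesis using rep_prob_zero_set[OF Fz] by simp
  qed
  have "(\<Sum>k<N. L (g k)) - (\<Sum>k<N. fa_integral rep_prob (g k))
      \<le> (\<Sum>k<N. zs_content (F k) - zs_content (F (Suc k)))"
    unfolding sum_subtractf[symmetric] by (rule sum_mono) (use Lg Ig in \<open>smt (verit)\<close>)
  also have "\<dots> = zs_content (F 0) - zs_content (F N)" by (rule sum_lessThan_telescope')
  also have "\<dots> \<le> 1" using zs_content_le_1[of "F 0"] zs_content_nonneg[of "F N"] by linarith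
  finally have "\<delta> * ((\<Sum>k<N. L (g k)) - (\<Sum>k<N. fa_integral rep_prob (g k))) \<le> \<delta> * 1"
    using d by (intro mult_left_mono) auto
  then show "L f \<le> fa_integral rep_prob f + \<delta>" using Lf If by (simp add: algebra_simps)
qed

lemma fa_integral_rep_prob:
  assumes f: "f \<in> Cb"
  shows "fa_integral rep_prob f = L f"
proof -
  have mf: "(\<lambda>x. - f x) \<in> Cb" by (rule Cb_minus[OF f])
  have "L (\<lambda>x. - f x) \<le> fa_integral rep_prob (\<lambda>x. - f x)" by (rule L_le_fa_integral_rep_prob[OF mf])
  moreover have "L (\<lambda>x. - f x) = - L f" using L_cmult[OF f, of "-1"] by simp
  moreover have "fa_integral rep_prob (\<lambda>x. - f x) = - fa_integral rep_prob f"
    using fa_integral_linear[OF fa_prob_rep_prob f f, of "-1" 0] by simp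
  ultimately show ?thesis using L_le_fa_integral_rep_prob[OF f] by linarith
qed

end

theorem positive_functional_representation:
  assumes "positive_functional L"
  shows "\<exists>\<gamma>\<in>M1. \<forall>f\<in>Cb. fa_integral \<gamma> f = L f"
  using positive_functional.rep_prob_M1[OF assms] positive_functional.fa_integral_rep_prob[OF assms] by blast

section \<open>The weak topology\<close>

lemma compactin_pullback_topology:
  assumes S: "S \<subseteq> A" and K: "compactin Y (f ` S)"
  shows "compactin (pullback_topology A f Y) S"
  unfolding compactin_def
proof (intro conjI allI impI)
  have "f ` S \<subseteq> topspace Y" using K by (rule compactin_subset_topspace)
  then show "S \<subseteq> topspace (pullback_topology A f Y)"
    using S by (auto simp: topspace_pullback_topology)
  fix \<U> assume U: "(\<forall>U\<in>\<U>. openin (pullback_topology A f Y) U) \<and> S \<subseteq> \<Union>\<U>"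
  have "\<forall>U\<in>\<U>. \<exists>V. openin Y V \<and> U = f -` V \<inter> A"
    using U by (simp add: openin_pullback_topology)
  then obtain V where V: "\<And>U. U \<in> \<U> \<Longrightarrow> openin Y (V U) \<and> U = f -` (V U) \<inter> A" by metis
  have "f ` S \<subseteq> \<Union> (V ` \<U>)"
  proof
    fix y assume "y \<in> f ` S"
    then obtain x where x: "x \<in> S" "y = f x" by blast
    then obtain U where "U \<in> \<U>" "x \<in> U" using U by blast
    then show "y \<in> \<Union> (V ` \<U>)" using V[of U] x by blast
  qed
  moreover have "\<forall>W\<in>V ` \<U>. openin Y W" using V by blast
  ultimately obtain \<F>' where F': "finite \<F>'" "\<F>' \<subseteq> V ` \<U>" "f ` S \<subseteq> \<Union>\<F>'"
    using K unfolding compactin_def by meson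
  obtain \<F> where F: "\<F> \<subseteq> \<U>" "finite \<F>" "\<F>' = V ` \<F>"
    using finite_subset_image[OF F'(1) F'(2)] by blast
  have "S \<subseteq> \<Union>\<F>"
  proof
    fix x assume x: "x \<in> S"
    then obtain W where W: "W \<in> \<F>'" "f x \<in> W" using F'(3) by blast
    then obtain U where U': "U \<in> \<F>" "W = V U" using F(3) by blast
    then have "x \<in> U" using V[of U] F(1) W x S by blast
    then show "x \<in> \<Union>\<F>" using U' by blast
  qed
  then show "\<exists>\<F>. finite \<F> \<and> \<F> \<subseteq> \<U> \<and> S \<subseteq> \<Union>\<F>" using F by blast
qed

lemma openin_powertop_real_nbhd:
  assumes "finite Fs" "Fs \<subseteq> I"
  shows "openin (powertop_real I) {y \<in> topspace (powertop_real I). \<forall>f\<in>Fs. \<bar>y f - x f\<bar> < \<epsilon>}"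
  using assms
proof (induction Fs rule: finite_induct)
  case empty
  then show ?case using openin_topspace[of "powertop_real I"] by simp
next
  case (insert g Fs)
  have c: "continuous_map (powertop_real I) euclideanreal (\<lambda>y. y g)"
    using insert.prems by (intro continuous_map_product_projection) auto
  have o: "openin euclideanreal {r. \<bar>r - x g\<bar> < \<epsilon>}"
  proof -
    have "{r. \<bar>r - x g\<bar> < \<epsilon>} = ball (x g) \<epsilon>" by (auto simp: dist_real_def abs_minus_commute)
    then show ?thesis by simp
  qed
  have "openin (powertop_real I) ({y \<in> topspace (powertop_real I). y g \<in> {r. \<bar>r - x g\<bar> < \<epsilon>}}
      \<inter> {y \<in> topspace (powertop_real I). \<forall>f\<in>Fs. \<bar>y f - x f\<bar> < \<epsilon>})"
    using openin_continuous_map_preimage[OF c o] insert by blast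
  moreover have "{y \<in> topspace (powertop_real I). y g \<in> {r. \<bar>r - x g\<bar> < \<epsilon>}}
      \<inter> {y \<in> topspace (powertop_real I). \<forall>f\<in>Fs. \<bar>y f - x f\<bar> < \<epsilon>}
      = {y \<in> topspace (powertop_real I). \<forall>f\<in>insert g Fs. \<bar>y f - x f\<bar> < \<epsilon>}" by auto
  ultimately show ?case by simp
qed

definition integral_map :: "('z::topological_space set \<Rightarrow> real) \<Rightarrow> ('z \<Rightarrow> real) \<Rightarrow> real" where
  "integral_map \<gamma> = restrict (\<lambda>f. fa_integral \<gamma> f) Cb"

lemma integral_map_apply: "f \<in> Cb \<Longrightarrow> integral_map \<gamma> f = fa_integral \<gamma> f"
  by (simp add: integral_map_def)

lemma weak_top_eq_pullback_integral_map: "weak_top = pullback_topology M1 integral_map (powertop_real Cb)"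
  unfolding weak_top_def integral_map_def ..

lemma closure_of_integral_map_approx:
  assumes x: "x \<in> powertop_real Cb closure_of (integral_map ` S)" and Fs: "finite Fs" "Fs \<subseteq> Cb" and e: "\<epsilon> > 0"
  shows "\<exists>\<gamma>\<in>S. \<forall>f\<in>Fs. \<bar>fa_integral \<gamma> f - x f\<bar> < \<epsilon>"
proof -
  define W where "W = {y \<in> topspace (powertop_real Cb). \<forall>f\<in>Fs. \<bar>y f - x f\<bar> < \<epsilon>}"
  have "openin (powertop_real Cb) W" unfolding W_def by (rule openin_powertop_real_nbhd[OF Fs])
  moreover have "x \<in> W" unfolding W_def using x e by (auto simp: in_closure_of)
  ultimately obtain y where y: "y \<in> integral_map ` S" "y \<in> W" using x unfolding in_closure_of by blast
  then obtain \<gamma> where g: "\<gamma> \<in> S" "y = integral_map \<gamma>" by blast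
  have "\<forall>f\<in>Fs. y f = fa_integral \<gamma> f" using g Fs(2) unfolding integral_map_def by auto
  then show ?thesis using y(2) g(1) unfolding W_def by auto
qed

lemma closure_of_integral_map_closed_range:
  assumes x: "x \<in> powertop_real Cb closure_of (integral_map ` S)" and f: "f \<in> Cb" and T: "closed T"
    and range: "\<And>\<gamma>. \<gamma> \<in> S \<Longrightarrow> fa_integral \<gamma> f \<in> T"
  shows "x f \<in> T"
proof (rule ccontr)
  assume "x f \<notin> T"
  then obtain e where e: "0 < e" "ball (x f) e \<subseteq> - T"
    using T open_contains_ball[of "- T"] by (auto simp: open_Compl)
  then obtain \<gamma> where "\<gamma> \<in> S" "\<forall>k\<in>{f}. \<bar>fa_integral \<gamma> k - x k\<bar> < e"
    using closure_of_integral_map_approx[OF x, of "{f}" e] f by auto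
  then have "fa_integral \<gamma> f \<in> ball (x f) e" "fa_integral \<gamma> f \<in> T"
    using range by (auto simp: dist_real_def abs_minus_commute)
  then show False using e(2) by blast
qed

lemma positive_functional_closure_of_integral_map:
  assumes x: "x \<in> powertop_real Cb closure_of (integral_map ` S)" and S: "S \<subseteq> M1"
  shows "positive_functional x"
proof
  fix f g :: "'a \<Rightarrow> real" and a b :: real assume f: "f \<in> Cb" and g: "g \<in> Cb"
  define h where "h = (\<lambda>z. a * f z + b * g z)"
  have hC: "h \<in> Cb" unfolding h_def by (intro Cb_add Cb_cmult f g)
  have "x h = a * x f + b * x g"
  proof (rule eq_linear_comb_if_approx)
    fix \<delta> :: real assume "0 < \<delta>"
    then obtain \<gamma> where "\<gamma> \<in> S" and ap: "\<forall>k\<in>{f, g, h}. \<bar>fa_integral \<gamma> k - x k\<bar> < \<delta>"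
      using closure_of_integral_map_approx[OF x, of "{f, g, h}" \<delta>] f g hC by auto
    moreover have "fa_integral \<gamma> h = a * fa_integral \<gamma> f + b * fa_integral \<gamma> g"
      unfolding h_def using \<open>\<gamma> \<in> S\<close> S by (intro fa_integral_linear[OF M1_fa_prob f g]) blast
    ultimately show "\<exists>x' y' z'. \<bar>x h - x'\<bar> \<le> \<delta> \<and> \<bar>x f - y'\<bar> \<le> \<delta> \<and> \<bar>x g - z'\<bar> \<le> \<delta> \<and> x' = a * y' + b * z'"
      by (intro exI[of _ "fa_integral \<gamma> h"] exI[of _ "fa_integral \<gamma> f"] exI[of _ "fa_integral \<gamma> g"])
        (auto simp: abs_minus_commute)
  qed
  then show "x (\<lambda>z. a * f z + b * g z) = a * x f + b * x g" unfolding h_def by simp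
next
  fix f :: "'a \<Rightarrow> real" assume f: "f \<in> Cb" and nn: "\<forall>z. 0 \<le> f z"
  have "x f \<in> {0..}"
    using S by (intro closure_of_integral_map_closed_range[OF x f])
      (auto intro: fa_integral_nonneg[OF M1_fa_prob bdd_fun_Cb[OF f] nn])
  then show "0 \<le> x f" by simp
next
  have "x (\<lambda>z. 1) \<in> {1}"
    using S by (intro closure_of_integral_map_closed_range[OF x Cb_const])
      (auto simp: fa_integral_const[OF M1_fa_prob])
  then show "x (\<lambda>z. 1) = 1" by simp
qed

lemma integral_map_in_topspace: "integral_map \<gamma> \<in> topspace (powertop_real Cb)"
  unfolding integral_map_def by simp

lemma integral_map_eqI:
  assumes x: "x \<in> topspace (powertop_real Cb)" and eq: "\<And>f. f \<in> Cb \<Longrightarrow> fa_integral \<gamma> f = x f"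
  shows "integral_map \<gamma> = x"
proof
  fix f show "integral_map \<gamma> f = x f"
  proof (cases "f \<in> Cb")
    case True
    then show ?thesis using eq by (simp add: integral_map_def)
  next
    case False
    then have "x f = undefined" using x by (simp add: PiE_def extensional_def)
    then show ?thesis using False by (simp add: integral_map_def)
  qed
qed

lemma closedin_powertop_real_le:
  assumes "f \<in> I"
  shows "closedin (powertop_real I) {y \<in> topspace (powertop_real I). y f \<le> t}"
proof -
  have "continuous_map (powertop_real I) euclideanreal (\<lambda>y. y f)"
    using assms by (intro continuous_map_product_projection) auto
  then have "closedin (powertop_real I) {y \<in> topspace (powertop_real I). y f \<in> {..t}}"
    by (rule closedin_continuous_map_preimage) simp
  then show ?thesis by simp
qed

lemma compactin_integral_map_common_bound:
  fixes P :: "('z::topological_space set \<Rightarrow> real) set" and A :: "('z \<Rightarrow> real) set"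
  assumes K: "compactin (powertop_real Cb) (integral_map ` P)" and A: "A \<subseteq> Cb"
    and approx: "\<And>S e. finite S \<Longrightarrow> S \<subseteq> A \<Longrightarrow> 0 < e \<Longrightarrow> \<exists>\<gamma>\<in>P. \<forall>f\<in>S. fa_integral \<gamma> f \<le> r + e"
  shows "\<exists>\<gamma>\<in>P. \<forall>f\<in>A. fa_integral \<gamma> f \<le> r"
proof -
  define C where "C = (\<lambda>(f :: 'z \<Rightarrow> real, e :: real). {y \<in> topspace (powertop_real Cb). y f \<le> r + e})"
  define \<U> where "\<U> = C ` (A \<times> {0<..})"
  have "closedin (powertop_real Cb) U" if U: "U \<in> \<U>" for U
  proof -
    obtain f e where "f \<in> A" "U = C (f, e)" using U unfolding \<U>_def by blast
    then show ?thesis using A closedin_powertop_real_le[of f Cb "r + e"] unfolding C_def by auto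
  qed
  moreover have "integral_map ` P \<inter> \<Inter>\<F> \<noteq> {}" if \<F>: "finite \<F>" "\<F> \<subseteq> \<U>" for \<F>
  proof -
    obtain S where S: "S \<subseteq> A \<times> {0<..}" "finite S" "\<F> = C ` S"
      using finite_subset_image[OF \<F>[unfolded \<U>_def]] by blast
    define e0 where "e0 = Min (insert 1 (snd ` S))"
    have e0: "0 < e0" unfolding e0_def using S by (subst Min_gr_iff) auto
    have e0_le: "e0 \<le> e" if "(f, e) \<in> S" for f e
      unfolding e0_def using S(2) that by (intro Min_le) force+
    have "fst ` S \<subseteq> A" using S(1) by auto
    then obtain \<gamma> where \<gamma>: "\<gamma> \<in> P" "\<forall>f\<in>fst ` S. fa_integral \<gamma> f \<le> r + e0"
      using approx[OF finite_imageI[OF S(2)] _ e0] by blast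
    have "integral_map \<gamma> \<in> C (f, e)" if fe: "(f, e) \<in> S" for f e
    proof -
      have "f \<in> fst ` S" "f \<in> Cb" using fe S(1) A by force+
      then have "fa_integral \<gamma> f \<le> r + e" using \<gamma>(2) e0_le[OF fe] by fastforce
      then show ?thesis using integral_map_in_topspace \<open>f \<in> Cb\<close> by (simp add: C_def integral_map_apply)
    qed
    then have "integral_map \<gamma> \<in> \<Inter>\<F>" unfolding S(3) by fast
    then show ?thesis using \<gamma>(1) by blast
  qed
  ultimately have "integral_map ` P \<inter> \<Inter>\<U> \<noteq> {}"
    using K[unfolded compactin_fip] by (simp add: Ball_def)
  then obtain \<gamma> where "\<gamma> \<in> P" "integral_map \<gamma> \<in> \<Inter>\<U>" by blast
  moreover have "fa_integral \<gamma> f \<le> r" if "f \<in> A" "integral_map \<gamma> \<in> \<Inter>\<U>" for f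
  proof (rule field_le_epsilon)
    fix e :: real assume "0 < e"
    then have "integral_map \<gamma> \<in> C (f, e)" using that unfolding \<U>_def by blast
    then show "fa_integral \<gamma> f \<le> r + e" using that A by (auto simp: C_def integral_map_apply)
  qed
  ultimately show ?thesis by blast
qed

section \<open>Transport plans\<close>

lemma plans_M1: "plans (\<mu>::'a::topological_space measure) (\<nu>::'b::topological_space measure) \<subseteq> M1"
  unfolding plans_def by blast

lemma closedin_integral_map_plans:
  fixes \<mu> :: "'a::topological_space measure" and \<nu> :: "'b::topological_space measure"
  shows "closedin (powertop_real Cb) (integral_map ` plans \<mu> \<nu>)"
proof -
  have "x \<in> integral_map ` plans \<mu> \<nu>"
    if x: "x \<in> powertop_real Cb closure_of (integral_map ` plans \<mu> \<nu>)" for x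
  proof -
    obtain \<gamma> where \<gamma>: "\<gamma> \<in> M1" "\<forall>f\<in>Cb. fa_integral \<gamma> f = x f"
      using positive_functional_representation[OF positive_functional_closure_of_integral_map[OF x plans_M1]]
      by blast
    have "fa_integral \<gamma> (\<lambda>(x, y). \<phi> x + \<psi> y) = integral\<^sup>L \<mu> \<phi> + integral\<^sup>L \<nu> \<psi>"
      if "\<phi> \<in> Cb" "\<psi> \<in> Cb" for \<phi> :: "'a \<Rightarrow> real" and \<psi> :: "'b \<Rightarrow> real"
    proof -
      have "x (\<lambda>(x, y). \<phi> x + \<psi> y) \<in> {integral\<^sup>L \<mu> \<phi> + integral\<^sup>L \<nu> \<psi>}"
      proof (rule closure_of_integral_map_closed_range[OF x Cb_oplus[OF that]])
        fix \<gamma>' assume "\<gamma>' \<in> plans \<mu> \<nu>"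
        then show "fa_integral \<gamma>' (\<lambda>(x, y). \<phi> x + \<psi> y) \<in> {integral\<^sup>L \<mu> \<phi> + integral\<^sup>L \<nu> \<psi>}"
          using that unfolding plans_def by blast
      qed simp
      then show ?thesis using \<gamma>(2) Cb_oplus[OF that] by simp
    qed
    then have "\<gamma> \<in> plans \<mu> \<nu>" using \<gamma>(1) unfolding plans_def by blast
    moreover have "integral_map \<gamma> = x"
      using \<gamma>(2) in_closure_of[THEN iffD1, OF x] by (intro integral_map_eqI) blast+
    ultimately show ?thesis by blast
  qed
  then have "powertop_real Cb closure_of (integral_map ` plans \<mu> \<nu>) \<subseteq> integral_map ` plans \<mu> \<nu>"
    by blast
  moreover have "integral_map ` plans \<mu> \<nu> \<subseteq> topspace (powertop_real Cb)"
    using integral_map_in_topspace by blast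
  ultimately show ?thesis using closure_of_subset_eq by blast
qed

lemma compactin_integral_map_plans: "compactin (powertop_real Cb) (integral_map ` plans \<mu> \<nu>)"
proof (rule closed_compactin[OF _ _ closedin_integral_map_plans])
  show "compactin (powertop_real Cb) (PiE Cb (\<lambda>f. {- sup_abs f..sup_abs f}))"
    by (simp add: compactin_PiE)
  have "fa_integral \<gamma> f \<in> {- sup_abs f..sup_abs f}" if "\<gamma> \<in> plans \<mu> \<nu>" "f \<in> Cb" for \<gamma> f
    using abs_fa_integral_le[where f = f, OF M1_fa_prob[OF subsetD[OF plans_M1 that(1)]] abs_le_sup_abs[OF that(2)]]
    by (auto simp: abs_le_iff)
  then show "integral_map ` plans \<mu> \<nu> \<subseteq> PiE Cb (\<lambda>f. {- sup_abs f..sup_abs f})"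
    unfolding integral_map_def by (auto simp: restrict_PiE_iff)
qed

lemma compactin_weak_top_plans:
  fixes \<mu> :: "'a::topological_space measure" and \<nu> :: "'b::topological_space measure"
  shows "compactin weak_top (plans \<mu> \<nu>)"
  unfolding weak_top_eq_pullback_integral_map by (rule compactin_pullback_topology[OF plans_M1 compactin_integral_map_plans])


lemma plans_convex:
  fixes \<mu> :: "'a::topological_space measure" and \<nu> :: "'b::topological_space measure"
  assumes g1: "\<gamma>1 \<in> plans \<mu> \<nu>" and g2: "\<gamma>2 \<in> plans \<mu> \<nu>" and t: "0 \<le> t" "t \<le> 1"
  shows "(\<lambda>A. t * \<gamma>1 A + (1 - t) * \<gamma>2 A) \<in> plans \<mu> \<nu>"
  unfolding plans_def
proof (intro CollectI conjI ballI)
  have m1: "\<gamma>1 \<in> M1" and m2: "\<gamma>2 \<in> M1" using g1 g2 plans_M1 by blast+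
  show "(\<lambda>A. t * \<gamma>1 A + (1 - t) * \<gamma>2 A) \<in> M1" by (rule M1_convex_comb[OF m1 m2 t])
  fix \<phi> :: "'a \<Rightarrow> real" and \<psi> :: "'b \<Rightarrow> real" assume p: "\<phi> \<in> Cb" and q: "\<psi> \<in> Cb"
  have "fa_integral (\<lambda>A. t * \<gamma>1 A + (1 - t) * \<gamma>2 A) (\<lambda>(x, y). \<phi> x + \<psi> y)
      = t * fa_integral \<gamma>1 (\<lambda>(x, y). \<phi> x + \<psi> y) + (1 - t) * fa_integral \<gamma>2 (\<lambda>(x, y). \<phi> x + \<psi> y)"
    by (rule fa_integral_convex_comb[OF M1_fa_prob[OF m1] M1_fa_prob[OF m2] t Cb_oplus[OF p q]])
  also have "\<dots> = t * (integral\<^sup>L \<mu> \<phi> + integral\<^sup>L \<nu> \<psi>) + (1 - t) * (integral\<^sup>L \<mu> \<phi> + integral\<^sup>L \<nu> \<psi>)"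
    using g1 g2 p q unfolding plans_def by simp
  also have "\<dots> = integral\<^sup>L \<mu> \<phi> + integral\<^sup>L \<nu> \<psi>" by (simp add: algebra_simps)
  finally show "fa_integral (\<lambda>A. t * \<gamma>1 A + (1 - t) * \<gamma>2 A) (\<lambda>(x, y). \<phi> x + \<psi> y) = integral\<^sup>L \<mu> \<phi> + integral\<^sup>L \<nu> \<psi>" .
qed

lemma plans_nonempty:
  assumes "v_min \<mu> \<nu> c < \<infinity>"
  shows "plans \<mu> \<nu> \<noteq> {}"
proof
  assume "plans \<mu> \<nu> = {}"
  then have "v_min \<mu> \<nu> c = \<infinity>" unfolding v_min_def by (simp add: top_ereal_def)
  with assms show False by simp
qed

lemma lsc_integral_ge_lower_bound:
  assumes "fa_prob \<gamma>" "\<And>z. ereal b \<le> c z"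
  shows "ereal b \<le> lsc_integral \<gamma> c"
proof -
  have "(\<lambda>z. b) \<in> {f \<in> Cb. \<forall>z. ereal (f z) \<le> c z}" using assms(2) by simp
  then have "ereal (fa_integral \<gamma> (\<lambda>z. b)) \<le> lsc_integral \<gamma> c"
    unfolding lsc_integral_def by (rule SUP_upper)
  then show ?thesis using fa_integral_const[OF assms(1)] by simp
qed

lemma v_min_finite:
  assumes c: "c \<in> lsc_bi" and v: "v_min \<mu> \<nu> c < \<infinity>"
  shows "\<exists>r. v_min \<mu> \<nu> c = ereal r"
proof -
  obtain b :: real where b: "\<forall>z. ereal b \<le> c z" using c unfolding lsc_bi_def by blast
  have "ereal b \<le> v_min \<mu> \<nu> c"
    unfolding v_min_def
  proof (rule INF_greatest)
    fix \<gamma> assume "\<gamma> \<in> plans \<mu> \<nu>"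
    then show "ereal b \<le> lsc_integral \<gamma> c"
      using lsc_integral_ge_lower_bound[OF M1_fa_prob] plans_M1 b by blast
  qed
  then show ?thesis using v by (cases "v_min \<mu> \<nu> c") auto
qed

lemma plans_attain_v_min:
  fixes c :: "'a::topological_space \<times> 'b::topological_space \<Rightarrow> ereal"
  assumes c: "c \<in> lsc_bi" and v: "v_min \<mu> \<nu> c < \<infinity>"
  shows "\<exists>\<gamma>\<in>plans \<mu> \<nu>. lsc_integral \<gamma> c = v_min \<mu> \<nu> c"
proof -
  define A where "A = {f\<in>Cb. \<forall>z. ereal (f z) \<le> c z}"
  obtain b :: real where b: "\<forall>z. ereal b \<le> c z" using c unfolding lsc_bi_def by blast
  obtain r where r: "v_min \<mu> \<nu> c = ereal r" using v_min_finite[OF c v] by blast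
  have "\<exists>\<gamma>\<in>plans \<mu> \<nu>. \<forall>f\<in>A. fa_integral \<gamma> f \<le> r"
  proof (rule compactin_integral_map_common_bound[OF compactin_integral_map_plans])
    show "A \<subseteq> Cb" unfolding A_def by blast
    fix S e assume S: "finite S" "S \<subseteq> A" and e: "0 < (e::real)"
    obtain g where g: "g \<in> A" "\<forall>f\<in>S. \<forall>z. f z \<le> g z"
      using Cb_minorants_directed[OF S[unfolded A_def] b] unfolding A_def by blast
    have "v_min \<mu> \<nu> c < ereal (r + e)" using r e by simp
    then obtain \<gamma> where \<gamma>: "\<gamma> \<in> plans \<mu> \<nu>" "lsc_integral \<gamma> c < ereal (r + e)"
      unfolding v_min_def by (auto simp: INF_less_iff)
    have fa: "fa_prob \<gamma>" using \<gamma>(1) plans_M1 M1_fa_prob by blast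
    have gC: "g \<in> Cb" using g(1) unfolding A_def by blast
    have "ereal (fa_integral \<gamma> g) \<le> lsc_integral \<gamma> c"
      unfolding lsc_integral_def using g(1) unfolding A_def by (rule SUP_upper)
    then have "ereal (fa_integral \<gamma> g) < ereal (r + e)" using \<gamma>(2) by (rule le_less_trans)
    then have "fa_integral \<gamma> g < r + e" by simp
    moreover have "fa_integral \<gamma> f \<le> fa_integral \<gamma> g" if "f \<in> S" for f
      using fa_integral_mono[OF fa _ gC] g(2) that S(2) unfolding A_def by blast
    ultimately have "\<forall>f\<in>S. fa_integral \<gamma> f \<le> r + e" by fastforce
    then show "\<exists>\<gamma>\<in>plans \<mu> \<nu>. \<forall>f\<in>S. fa_integral \<gamma> f \<le> r + e" using \<gamma>(1) by blast
  qed
  then obtain \<gamma> where \<gamma>: "\<gamma> \<in> plans \<mu> \<nu>" "\<forall>f\<in>A. fa_integral \<gamma> f \<le> r" by blast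
  have "lsc_integral \<gamma> c \<le> v_min \<mu> \<nu> c"
    unfolding lsc_integral_def r using \<gamma>(2) unfolding A_def by (intro SUP_least) simp
  moreover have "v_min \<mu> \<nu> c \<le> lsc_integral \<gamma> c" unfolding v_min_def using \<gamma>(1) by (rule INF_lower)
  ultimately have "lsc_integral \<gamma> c = v_min \<mu> \<nu> c" by (rule antisym)
  then show ?thesis using \<gamma>(1) by blast
qed

theorem mainTheorem5:
  fixes \<mu> :: "'a::t2_space measure" and \<nu> :: "'b::t2_space measure"
    and c :: "'a \<times> 'b \<Rightarrow> ereal"
  assumes "completely_regular_space (euclidean :: 'a topology)"
    and "completely_regular_space (euclidean :: 'b topology)"
    and "baire_prob \<mu>" and "baire_prob \<nu>"
    and "c \<in> lsc_bi"
    and "v_min \<mu> \<nu> c < \<infinity>"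
  shows "plans \<mu> \<nu> \<noteq> {}
    \<and> (\<forall>\<gamma>1\<in>plans \<mu> \<nu>. \<forall>\<gamma>2\<in>plans \<mu> \<nu>. \<forall>t::real. 0 \<le> t \<and> t \<le> 1 \<longrightarrow>
          (\<lambda>A. t * \<gamma>1 A + (1 - t) * \<gamma>2 A) \<in> plans \<mu> \<nu>)
    \<and> compactin weak_top (plans \<mu> \<nu>)
    \<and> (\<exists>\<gamma>\<in>plans \<mu> \<nu>. lsc_integral \<gamma> c = v_min \<mu> \<nu> c)"
  using plans_nonempty[OF assms(6)] plans_convex[of _ \<mu> \<nu>] compactin_weak_top_plans[of \<mu> \<nu>]
    plans_attain_v_min[OF assms(5,6)]
  by blast

end
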